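(* Let $\langle\theta\rangle:=B_+/B_1$, where $B_1=\langle\eta,\xi,\xi_L\rangle$. Then $HH^n_{(1-n)}(B,\langle\theta\rangle)\cong k$ for $n\in\{1,2\}$ and $0$ otherwise; $HH^n_{(2-n)}(B,\langle\theta\rangle)\cong k$ for $n\in\{5,6\}$ and $0$ otherwise; $HH^n_{(3-n)}(B,\langle\theta\rangle)\cong k$ for $n\in\{9,10\}$ and $0$ otherwise; $HH^n_{(4-n)}(B,\langle\theta\rangle)\cong k$ for $n\in\{13,14\}$ and $0$ otherwise.
   Context: Let $k$ be a field with $\operatorname{char}k\neq2,3$. Let $B$ be the graded $k$-algebra with $k$-basis $\mathrm{id}_L,\mathrm{id}_{\mathcal O},\theta$ (degree $0$) and $\eta,\xi,\xi_L$ (degree $1$), whose only nonzero products of basis elements are $\mathrm{id}_L\mathrm{id}_L=\mathrm{id}_L$, $\mathrm{id}_{\mathcal O}\mathrm{id}_{\mathcal O}=\mathrm{id}_{\mathcal O}$, $\mathrm{id}_L\xi_L=\xi_L\mathrm{id}_L=\xi_L$, $\mathrm{id}_{\mathcal O}\xi=\xi\mathrm{id}_{\mathcal O}=\xi$, $\mathrm{id}_L\eta=\eta\,\mathrm{id}_{\mathcal O}=\eta$, $\mathrm{id}_{\mathcal O}\theta=\theta\,\mathrm{id}_L=\theta$, $\theta\eta=\xi$, $\eta\theta=\xi_L$. Let $R=k\langle\mathrm{id}_L,\mathrm{id}_{\mathcal O}\rangle$, $B_+=\langle\theta,\eta,\xi,\xi_L\rangle$, $B=R\oplus B_+$; tensor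 products are over $R$. $B_1=\langle\eta,\xi,\xi_L\rangle$ is a sub-bimodule of $B_+$. For a graded $B$-bimodule $M$, the reduced Hochschild complex is $C^n(B,M)=\operatorname{Hom}_{R\text{-}R}(B_+^{\otimes_R n},M)$ with $\delta(\phi)(a_0,\dots,a_n)=a_0\phi(a_1,\dots,a_n)+\sum_{i=1}^n(-1)^i\phi(a_0,\dots,a_{i-1}a_i,\dots,a_n)+(-1)^{n+1}\phi(a_0,\dots,a_{n-1})a_n$; $HH^n_{(m)}(B,M)$ is the cohomology of the subcomplex of cochains homogeneous of internal degree $m$ ($\deg\phi(x)=\deg x+m$). *)

theory Defs
  imports Main
begin

datatype bas = IdL | IdO | Th | Eta | Xi | XiL

definition basis_set :: "bas set" where
  "basis_set = {IdL, IdO, Th, Eta, Xi, XiL}"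

definition degb :: "bas \<Rightarrow> int" where
  "degb c = (if c \<in> {IdL, IdO, Th} then 0 else 1)"

text \<open>Products of basis elements (None = zero).\<close>
fun bmul :: "bas \<Rightarrow> bas \<Rightarrow> bas option" where
  "bmul IdL IdL = Some IdL"
| "bmul IdO IdO = Some IdO"
| "bmul IdL XiL = Some XiL"
| "bmul XiL IdL = Some XiL"
| "bmul IdO Xi = Some Xi"
| "bmul Xi IdO = Some Xi"
| "bmul IdL Eta = Some Eta"
| "bmul Eta IdO = Some Eta"
| "bmul IdO Th = Some Th"
| "bmul Th IdL = Some Th"
| "bmul Th Eta = Some Xi"
| "bmul Eta Th = Some XiL"
| "bmul _ _ = None"

type_synonym 'k B = "bas \<Rightarrow> 'k"

definition bmult :: "'k::field B \<Rightarrow> 'k B \<Rightarrow> 'k B" where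
  "bmult x y = (\<lambda>c. \<Sum>a\<in>basis_set. \<Sum>b\<in>basis_set.
                     (if bmul a b = Some c then x a * y b else 0))"

definition Rset :: "'k::field B set" where
  "Rset = {x. \<forall>c. c \<notin> {IdL, IdO} \<longrightarrow> x c = 0}"

definition Bplus :: "'k::field B set" where
  "Bplus = {x. x IdL = 0 \<and> x IdO = 0}"

definition B1 :: "'k::field B set" where
  "B1 = {x. x IdL = 0 \<and> x IdO = 0 \<and> x Th = 0}"

definition homog :: "int \<Rightarrow> 'k::field B \<Rightarrow> bool" where
  "homog d x \<longleftrightarrow> (\<forall>c. x c \<noteq> 0 \<longrightarrow> degb c = d)"

text \<open>M = B_+/B_1 is one-dimensional, spanned by the class of theta; we represent
  an element of M by its coordinate in 'k.  The quotient map B_+ \<rightarrow> M is qproj,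
  whose kernel on B_+ is exactly B_1 (lemma below), and the B-bimodule structure
  is induced from multiplication in B (B_+ being an ideal).\<close>
definition qproj :: "'k::field B \<Rightarrow> 'k" where
  "qproj x = x Th"

definition qlift :: "'k::field \<Rightarrow> 'k B" where
  "qlift m = (\<lambda>c. if c = Th then m else 0)"

lemma B1_is_kernel: "B1 = {x \<in> Bplus. qproj x = 0}"
  by (auto simp: B1_def Bplus_def qproj_def)

definition lact :: "'k::field B \<Rightarrow> 'k \<Rightarrow> 'k" where
  "lact b m = qproj (bmult b (qlift m))"

definition ract :: "'k::field \<Rightarrow> 'k B \<Rightarrow> 'k" where
  "ract m b = qproj (bmult (qlift m) b)"

text \<open>Grading of M: the class of theta has degree 0.\<close>
definition Mdeg :: "int \<Rightarrow> 'k::field set" where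
  "Mdeg d = (if d = 0 then UNIV else {0})"

text \<open>An n-cochain Hom_{R-R}(B_+^{\<otimes>_R n}, M) is represented as a function on lists of
  length n of elements of B_+ which is k-multilinear, R-balanced and R-R-linear
  (universal property of the tensor product over R); it is 0 off B_+^n.
  For n = 0, B_+^{\<otimes> 0} = R and the condition is r m = m r.\<close>
definition cochains :: "nat \<Rightarrow> int \<Rightarrow> ('k::field B list \<Rightarrow> 'k) set" where
  "cochains n m = {\<phi>.
     (\<forall>as. \<not> (length as = n \<and> set as \<subseteq> Bplus) \<longrightarrow> \<phi> as = 0)
   \<and> (\<forall>as i x y. length as = n \<and> set as \<subseteq> Bplus \<and> i < n \<and> x \<in> Bplus \<and> y \<in> Bplus \<longrightarrow>
        \<phi> (as[i := (\<lambda>c. x c + y c)]) = \<phi> (as[i := x]) + \<phi> (as[i := y]))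
   \<and> (\<forall>as i x s. length as = n \<and> set as \<subseteq> Bplus \<and> i < n \<and> x \<in> Bplus \<longrightarrow>
        \<phi> (as[i := (\<lambda>c. s * x c)]) = s * \<phi> (as[i := x]))
   \<and> (\<forall>as i r. length as = n \<and> set as \<subseteq> Bplus \<and> Suc i < n \<and> r \<in> Rset \<longrightarrow>
        \<phi> (as[i := bmult (as ! i) r]) = \<phi> (as[Suc i := bmult r (as ! Suc i)]))
   \<and> (\<forall>as r. length as = n \<and> set as \<subseteq> Bplus \<and> 0 < n \<and> r \<in> Rset \<longrightarrow>
        \<phi> (as[0 := bmult r (as ! 0)]) = lact r (\<phi> as)
      \<and> \<phi> (as[n - 1 := bmult (as ! (n - 1)) r]) = ract (\<phi> as) r)
   \<and> (n = 0 \<longrightarrow> (\<forall>r \<in> Rset. lact r (\<phi> []) = ract (\<phi> []) r))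
   \<and> (\<forall>as ds. length as = n \<and> set as \<subseteq> Bplus \<and> list_all2 homog ds as \<longrightarrow>
        \<phi> as \<in> Mdeg (sum_list ds + m))}"

definition hdiff :: "nat \<Rightarrow> ('k::field B list \<Rightarrow> 'k) \<Rightarrow> ('k B list \<Rightarrow> 'k)" where
  "hdiff n \<phi> = (\<lambda>as. if length as = Suc n \<and> set as \<subseteq> Bplus then
       lact (as ! 0) (\<phi> (tl as))
     + (\<Sum>i\<in>{1..n}. (-1) ^ i *
          \<phi> (take (i - 1) as @ [bmult (as ! (i - 1)) (as ! i)] @ drop (Suc i) as))
     + (-1) ^ (Suc n) * ract (\<phi> (take n as)) (as ! n)
     else 0)"

definition cocycles :: "nat \<Rightarrow> int \<Rightarrow> ('k::field B list \<Rightarrow> 'k) set" where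
  "cocycles n m = {\<phi> \<in> cochains n m. hdiff n \<phi> = (\<lambda>_. 0)}"

definition coboundaries :: "nat \<Rightarrow> int \<Rightarrow> ('k::field B list \<Rightarrow> 'k) set" where
  "coboundaries n m = (if n = 0 then {(\<lambda>_. 0)} else hdiff (n - 1) ` cochains (n - 1) m)"

text \<open>HH^n_(m)(B, <theta>) \<cong> k : there is a k-linear surjection from the cocycles
  onto k whose kernel is exactly the coboundaries (i.e. Z/B \<cong> k).\<close>
definition HH_iso_k :: "'k::field itself \<Rightarrow> nat \<Rightarrow> int \<Rightarrow> bool" where
  "HH_iso_k _ n m \<longleftrightarrow> (\<exists>f :: ('k B list \<Rightarrow> 'k) \<Rightarrow> 'k.
       (\<forall>x \<in> cocycles n m. \<forall>y \<in> cocycles n m. f (\<lambda>as. x as + y as) = f x + f y)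
     \<and> (\<forall>s. \<forall>x \<in> cocycles n m. f (\<lambda>as. s * x as) = s * f x)
     \<and> f ` cocycles n m = UNIV
     \<and> {x \<in> cocycles n m. f x = 0} = coboundaries n m)"

definition HH_zero :: "'k::field itself \<Rightarrow> nat \<Rightarrow> int \<Rightarrow> bool" where
  "HH_zero _ n m \<longleftrightarrow> (cocycles n m :: ('k B list \<Rightarrow> 'k) set) = coboundaries n m"

end

theory Submission
  imports Defs
begin

(* A reduced Hochschild cochain of B with values in M = <theta> is
   k-multilinear, hence determined by its values on tuples of basis vectors of
   B_+ = span {theta, eta, xi, xiL}.  R-balancedness and R-linearity force such a value
   to vanish unless the tuple is a composable path of arrows from idO to idL, and the
   grading forces its total degree to be -m.  A path from idO is determined by its word
   of weights (1 for theta, eta and 2 for xi, xiL), and the admissible words are the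
   words of length n over {1, 2} with letter sum 1 - 2m.  Conversely every function on
   these words extends to a cochain (cochain_of).  Under this identification the
   Hochschild differential becomes the word differential wdiff, which merges two adjacent
   letters 1 1 into 2 with alternating signs (theta eta = xi, eta theta = xiL).
   The cohomology of the word complex is computed directly: it is k, detected by the
   value at the word 1 2 1 2 ..., when (n, l) is critical (2l = 3n for even n,
   2l = 3n - 1 for odd n), and 0 otherwise (HH_criterion).  The theorem follows by
   deciding which n are critical for m = j - n, j = 1, ..., 4. *)

section \<open>Multilinear extension from basis tuples\<close>

definition pbasis :: "bas set" where "pbasis = {Th, Eta, Xi, XiL}"

definition bvec :: "bas \<Rightarrow> 'k::field B" where "bvec c = (\<lambda>x. if x = c then 1 else 0)"

lemma bvec_apply: "bvec c x = (if x = c then 1 else 0)" by (simp add: bvec_def)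

lemma finite_pbasis[simp]: "finite pbasis" by (simp add: pbasis_def)

fun mlin :: "(bas list \<Rightarrow> 'k::field) \<Rightarrow> 'k B list \<Rightarrow> 'k" where
  "mlin G [] = G []"
| "mlin G (a # as) = (\<Sum>c\<in>pbasis. a c * mlin (\<lambda>cs. G (c # cs)) as)"

lemma mlin_scale: "mlin (\<lambda>cs. s * G cs) as = s * mlin G as"
  by (induction as arbitrary: G) (simp_all add: sum_distrib_left algebra_simps)

lemma mlin_sum: "finite I \<Longrightarrow> mlin (\<lambda>cs. \<Sum>i\<in>I. F i cs) as = (\<Sum>i\<in>I. mlin (F i) as)"
proof (induction as arbitrary: F)
  case Nil then show ?case by simp
next
  case (Cons a as)
  have "mlin (\<lambda>cs. \<Sum>i\<in>I. F i cs) (a # as) = (\<Sum>c\<in>pbasis. a c * (\<Sum>i\<in>I. mlin (\<lambda>cs. F i (c # cs)) as))"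
    using Cons by simp
  also have "\<dots> = (\<Sum>i\<in>I. \<Sum>c\<in>pbasis. a c * mlin (\<lambda>cs. F i (c # cs)) as)"
    by (simp add: sum_distrib_left sum.swap[of _ I])
  finally show ?case by simp
qed

lemma mlin_cong: "(\<And>cs. length cs = length as \<Longrightarrow> set cs \<subseteq> pbasis \<Longrightarrow> G cs = H cs) \<Longrightarrow> mlin G as = mlin H as"
proof (induction as arbitrary: G H)
  case Nil then show ?case by simp
next
  case (Cons a as)
  show ?case unfolding mlin.simps
    apply (rule sum.cong[OF refl])
    apply (subst Cons.IH[where H="\<lambda>cs. H (_ # cs)"])
     apply (rule Cons.prems) apply auto
    done
qed

lemma mlin_zero_fun: "mlin (\<lambda>_. 0) as = 0"
  using mlin_scale[of 0 "\<lambda>_. 0" as] by simp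

lemma mlin_zero: "(\<And>cs. length cs = length as \<Longrightarrow> set cs \<subseteq> pbasis \<Longrightarrow> (\<forall>i<length as. (as!i) (cs!i) \<noteq> 0) \<Longrightarrow> G cs = 0) \<Longrightarrow> mlin G as = 0"
proof (induction as arbitrary: G)
  case Nil then show ?case by simp
next
  case (Cons a as)
  have "a c * mlin (\<lambda>cs. G (c # cs)) as = 0" if c: "c \<in> pbasis" for c
  proof (cases "a c = 0")
    case True then show ?thesis by simp
  next
    case False
    have "mlin (\<lambda>cs. G (c # cs)) as = 0"
    proof (rule Cons.IH)
      fix cs assume "length cs = length as" "set cs \<subseteq> pbasis" "\<forall>i<length as. (as ! i) (cs ! i) \<noteq> 0"
      then show "G (c # cs) = 0"
        using False c by (intro Cons.prems) (auto simp: nth_Cons split: nat.splits)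
    qed
    then show ?thesis by simp
  qed
  then show ?case by (simp add: sum.neutral)
qed

lemma mlin_basis: "set cs \<subseteq> pbasis \<Longrightarrow> mlin G (map bvec cs) = G cs"
proof (induction cs arbitrary: G)
  case Nil then show ?case by simp
next
  case (Cons c cs)
  have IH: "mlin (\<lambda>v. G (x # v)) (map bvec cs) = G (x # cs)" for x
    using Cons.prems by (intro Cons.IH) simp
  have "mlin G (map bvec (c # cs)) = (\<Sum>x\<in>pbasis. bvec c x * mlin (\<lambda>v. G (x # v)) (map bvec cs))"
    by simp
  also have "\<dots> = (\<Sum>x\<in>pbasis. (if x = c then 1 else 0) * G (x # cs))"
    by (simp only: IH bvec_apply)
  also have "\<dots> = (\<Sum>x\<in>pbasis. if x = c then G (x # cs) else 0)" by (rule sum.cong) auto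
  also have "\<dots> = G (c # cs)" using Cons.prems by (simp add: sum.delta)
  finally show ?case .
qed

lemma mlin_upd_add: "i < length as \<Longrightarrow> mlin G (as[i := (\<lambda>c. x c + y c)]) = mlin G (as[i := x]) + mlin G (as[i := y])"
proof (induction as arbitrary: i G)
  case Nil then show ?case by simp
next
  case (Cons a as)
  show ?case
  proof (cases i)
    case 0 then show ?thesis by (simp add: distrib_right sum.distrib)
  next
    case (Suc j) then show ?thesis using Cons by (simp add: distrib_left sum.distrib)
  qed
qed

lemma mlin_upd_weight: "i < length as \<Longrightarrow> mlin G (as[i := (\<lambda>c. f c * (as!i) c)]) = mlin (\<lambda>cs. f (cs!i) * G cs) as"
proof (induction as arbitrary: i G)
  case Nil then show ?case by simp
next
  case (Cons a as)
  show ?case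
  proof (cases i)
    case 0 then show ?thesis by (simp add: mlin_scale algebra_simps)
  next
    case (Suc j) then show ?thesis using Cons by simp
  qed
qed

lemma mlin_snoc: "mlin G (xs @ [y]) = mlin (\<lambda>cs. \<Sum>c\<in>pbasis. y c * G (cs @ [c])) xs"
  by (induction xs arbitrary: G) simp_all

(* Every arrow of B_+ has a source and a target idempotent: idO * c = c = c * idL for
   theta, and so on.  The idempotents are their own source and target. *)
fun src :: "bas \<Rightarrow> bas" where
  "src IdL = IdL" | "src IdO = IdO" | "src Th = IdO" | "src Eta = IdL" | "src Xi = IdO" | "src XiL = IdL"

fun tgt :: "bas \<Rightarrow> bas" where
  "tgt IdL = IdL" | "tgt IdO = IdO" | "tgt Th = IdL" | "tgt Eta = IdO" | "tgt Xi = IdO" | "tgt XiL = IdL"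

lemma basis_set_all: "c \<in> basis_set" by (cases c) (auto simp: basis_set_def)

lemma finite_basis_set[simp]: "finite basis_set" by (simp add: basis_set_def)

lemma bmult_bvec: "bmult (bvec a) (bvec b) = (case bmul a b of Some c \<Rightarrow> bvec c | None \<Rightarrow> (\<lambda>_. 0))"
proof
  fix x
  have "bmult (bvec a) (bvec b) x = (\<Sum>a'\<in>basis_set. if a' = a then (\<Sum>b'\<in>basis_set.
        (if b' = b then (if bmul a' b' = Some x then 1 else 0) else 0)) else 0)"
    unfolding bmult_def
  proof (rule sum.cong[OF refl])
    fix a' assume "a' \<in> basis_set"
    show "(\<Sum>b'\<in>basis_set. if bmul a' b' = Some x then bvec a a' * bvec b b' else 0) = (if a' = a then (\<Sum>b'\<in>basis_set.
        (if b' = b then (if bmul a' b' = Some x then 1 else 0) else 0)) else 0)"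
    proof (cases "a' = a")
      case True
      have "(\<Sum>b'\<in>basis_set. if bmul a' b' = Some x then bvec a a' * bvec b b' else 0) =
        (\<Sum>b'\<in>basis_set. (if b' = b then (if bmul a' b' = Some x then 1 else 0) else 0))"
        using True by (intro sum.cong refl) (simp add: bvec_apply)
      then show ?thesis by (subst if_P[OF True])
    next
      case False
      then show ?thesis by (simp add: bvec_apply[of a a'] sum.neutral)
    qed
  qed
  also have "\<dots> = (if bmul a b = Some x then 1 else 0)"
    using basis_set_all[of a] basis_set_all[of b] by (simp add: sum.delta)
  finally show "bmult (bvec a) (bvec b) x = (case bmul a b of Some c \<Rightarrow> bvec c | None \<Rightarrow> (\<lambda>_. 0)) x"
    by (auto simp: bvec_apply split: option.splits)
qed

lemma lact_formula: "lact b x = b IdO * x"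
  by (simp add: lact_def qproj_def bmult_def qlift_def basis_set_def)

lemma ract_formula: "ract x b = x * b IdL"
  by (simp add: ract_def qproj_def bmult_def qlift_def basis_set_def)

lemma Bplus_iff: "x \<in> Bplus \<longleftrightarrow> x IdL = 0 \<and> x IdO = 0" by (simp add: Bplus_def)

lemma Rset_iff: "r \<in> Rset \<longleftrightarrow> r Th = 0 \<and> r Eta = 0 \<and> r Xi = 0 \<and> r XiL = 0"
  unfolding Rset_def apply auto subgoal for c by (cases c) auto done

lemma bmult_right_R: "x \<in> Bplus \<Longrightarrow> r \<in> Rset \<Longrightarrow> bmult x r = (\<lambda>c. r (tgt c) * x c)"
  apply (rule ext) subgoal for c by (cases c) (auto simp: Bplus_iff Rset_iff bmult_def basis_set_def)
  done

lemma bmult_left_R: "x \<in> Bplus \<Longrightarrow> r \<in> Rset \<Longrightarrow> bmult r x = (\<lambda>c. r (src c) * x c)"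
  apply (rule ext) subgoal for c by (cases c) (auto simp: Bplus_iff Rset_iff bmult_def basis_set_def)
  done

lemma bmult_Bplus: "x \<in> Bplus \<Longrightarrow> bmult x y \<in> Bplus"
  by (simp add: Bplus_iff bmult_def basis_set_def)

lemma bvec_Bplus: "c \<in> pbasis \<Longrightarrow> bvec c \<in> Bplus"
  by (auto simp: pbasis_def Bplus_iff bvec_apply)

lemma bvec_set: "set cs \<subseteq> pbasis \<Longrightarrow> set (map bvec cs) \<subseteq> Bplus"
  using bvec_Bplus by auto

lemma bvec_Rset: "i \<in> {IdO, IdL} \<Longrightarrow> bvec i \<in> Rset" by (auto simp: Rset_iff bvec_apply)

lemma Bplus_add: "x \<in> Bplus \<Longrightarrow> y \<in> Bplus \<Longrightarrow> (\<lambda>c. x c + y c) \<in> Bplus" by (simp add: Bplus_iff)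

lemma Bplus_scale: "x \<in> Bplus \<Longrightarrow> (\<lambda>c. s * x c) \<in> Bplus" by (simp add: Bplus_iff)

lemma set_update_sub: "set as \<subseteq> A \<Longrightarrow> x \<in> A \<Longrightarrow> set (as[i := x]) \<subseteq> A"
  by (meson set_update_subset_insert insert_subset order_trans subset_insertI2)

lemma src_tgt_pbasis: "c \<in> pbasis \<Longrightarrow> src c \<in> {IdO, IdL} \<and> tgt c \<in> {IdO, IdL}"
  by (auto simp: pbasis_def)

lemma bmul_tgt: "c \<in> pbasis \<Longrightarrow> bmul c (tgt c) = Some c" by (auto simp: pbasis_def)

lemma bmul_src: "c \<in> pbasis \<Longrightarrow> bmul (src c) c = Some c" by (auto simp: pbasis_def)

lemma bmul_src_none: "c \<in> pbasis \<Longrightarrow> i \<in> {IdO, IdL} \<Longrightarrow> i \<noteq> src c \<Longrightarrow> bmul i c = None"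
  by (auto simp: pbasis_def)

lemma bmul_path: "bmul c d = Some x \<Longrightarrow> src x = src c \<and> tgt c = src d \<and> tgt x = tgt d"
  by (cases c; cases d) auto

section \<open>Paths of arrows and words over {1, 2}\<close>

fun is_path :: "bas \<Rightarrow> bas list \<Rightarrow> bas \<Rightarrow> bool" where
  "is_path s [] t = (s = t)"
| "is_path s (c # cs) t = (src c = s \<and> is_path (tgt c) cs t)"

lemma is_path_nth: "is_path s cs t \<longleftrightarrow> (if cs = [] then s = t else src (cs!0) = s \<and>
   (\<forall>i. Suc i < length cs \<longrightarrow> tgt (cs!i) = src (cs!Suc i)) \<and> tgt (cs!(length cs - 1)) = t)"
proof (induction cs arbitrary: s)
  case Nil then show ?case by simp
next
  case (Cons c cs)
  show ?case
  proof (cases cs)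
    case Nil then show ?thesis by auto
  next
    case (Cons d ds)
    have "is_path s (c # cs) t \<longleftrightarrow> src c = s \<and> is_path (tgt c) cs t" by simp
    also have "\<dots> \<longleftrightarrow> src c = s \<and> src (cs!0) = tgt c \<and>
      (\<forall>i. Suc i < length cs \<longrightarrow> tgt (cs!i) = src (cs!Suc i)) \<and> tgt (cs!(length cs - 1)) = t"
      using Cons.IH Cons by auto
    also have "\<dots> \<longleftrightarrow> src ((c#cs)!0) = s \<and>
      (\<forall>i. Suc i < length (c#cs) \<longrightarrow> tgt ((c#cs)!i) = src ((c#cs)!Suc i)) \<and> tgt ((c#cs)!(length (c#cs) - 1)) = t"
      using Cons by (auto simp: nth_Cons split: nat.splits)
    finally show ?thesis by simp
  qed
qed

lemma is_path_merge: "bmul c d = Some x \<Longrightarrow> is_path s (x # cs) t \<Longrightarrow> is_path s (c # d # cs) t"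
  using bmul_path[of c d x] by auto

(* A path is determined by its start and its word of weights; letter and path_of
   reconstruct the path. *)
definition weight :: "bas \<Rightarrow> nat" where "weight c = (if c = Th \<or> c = Eta then 1 else 2)"

definition letter :: "bas \<Rightarrow> nat \<Rightarrow> bas" where
  "letter s x = (if s = IdO then (if x = 1 then Th else Xi) else (if x = 1 then Eta else XiL))"

fun path_of :: "bas \<Rightarrow> nat list \<Rightarrow> bas list" where
  "path_of s [] = []"
| "path_of s (x # w) = letter s x # path_of (tgt (letter s x)) w"

lemma path_of_len[simp]: "length (path_of s w) = length w"
  by (induction w arbitrary: s) auto

lemma letter_pbasis: "letter s x \<in> pbasis" by (simp add: letter_def pbasis_def)

lemma tgt_letter: "tgt (letter s x) \<in> {IdO, IdL}" by (simp add: letter_def)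

lemma path_of_weights: "set cs \<subseteq> pbasis \<Longrightarrow> is_path s cs t \<Longrightarrow> path_of s (map weight cs) = cs"
proof (induction cs arbitrary: s)
  case Nil then show ?case by simp
next
  case (Cons c cs)
  have "letter s (weight c) = c" using Cons.prems by (cases c) (auto simp: pbasis_def letter_def weight_def)
  then show ?case using Cons by simp
qed

lemma path_of_props:
  "s \<in> {IdO, IdL} \<Longrightarrow> set w \<subseteq> {1, 2} \<Longrightarrow>
   set (path_of s w) \<subseteq> pbasis \<and> map weight (path_of s w) = w \<and> (\<exists>t\<in>{IdO, IdL}. is_path s (path_of s w) t)"
proof (induction w arbitrary: s)
  case Nil then show ?case by auto
next
  case (Cons x w)
  have IH: "set (path_of (tgt (letter s x)) w) \<subseteq> pbasis \<and> map weight (path_of (tgt (letter s x)) w) = w \<and>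
     (\<exists>t\<in>{IdO, IdL}. is_path (tgt (letter s x)) (path_of (tgt (letter s x)) w) t)"
    using Cons tgt_letter by auto
  have "weight (letter s x) = x" "src (letter s x) = s" using Cons.prems by (auto simp: weight_def letter_def)
  then show ?case using IH letter_pbasis by auto
qed

(* The weight of a path is twice its degree plus the change of a potential, which is 1
   at idL and 0 at idO.  Hence paths from idO to idL of degree -m are exactly the paths
   whose word has letter sum 1 - 2m. *)
definition potential :: "bas \<Rightarrow> int" where "potential s = (if s = IdL then 1 else 0)"

lemma is_path_pot: "is_path s cs t \<Longrightarrow> set cs \<subseteq> pbasis \<Longrightarrow>
   int (sum_list (map weight cs)) = 2 * sum_list (map degb cs) + potential t - potential s"
proof (induction cs arbitrary: s)
  case Nil then show ?case by simp
next
  case (Cons c cs)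
  then have "int (sum_list (map weight cs)) = 2 * sum_list (map degb cs) + potential t - potential (tgt c)" by auto
  moreover have "int (weight c) = 2 * degb c + potential (tgt c) - potential (src c)"
    using Cons.prems by (cases c) (auto simp: pbasis_def weight_def degb_def potential_def)
  ultimately show ?case using Cons.prems by simp
qed

definition words :: "nat \<Rightarrow> int \<Rightarrow> nat list set" where
  "words n l = {u. length u = n \<and> set u \<subseteq> {1, 2} \<and> int (sum_list u) = l}"

lemma path_of_words:
  assumes "u \<in> words n (1 - 2 * m)"
  shows "is_path IdO (path_of IdO u) IdL \<and> sum_list (map degb (path_of IdO u)) = - m
     \<and> set (path_of IdO u) \<subseteq> pbasis \<and> map weight (path_of IdO u) = u \<and> length (path_of IdO u) = n"
proof -
  have u: "set u \<subseteq> {1, 2}" "int (sum_list u) = 1 - 2 * m" "length u = n" using assms by (auto simp: words_def)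
  obtain t where t: "t \<in> {IdO, IdL}" "is_path IdO (path_of IdO u) t" and bp: "set (path_of IdO u) \<subseteq> pbasis"
    and weight: "map weight (path_of IdO u) = u"
    using path_of_props[of IdO u] u by auto
  have "int (sum_list u) = 2 * sum_list (map degb (path_of IdO u)) + potential t - potential IdO"
    using is_path_pot[OF t(2) bp] weight by simp
  then have "1 - 2 * m = 2 * sum_list (map degb (path_of IdO u)) + potential t" using u by (simp add: potential_def)
  moreover have "potential t = 0 \<or> potential t = 1" by (simp add: potential_def)
  ultimately have ppt: "potential t = 1" by presburger
  with \<open>1 - 2 * m = _\<close> have sd: "sum_list (map degb (path_of IdO u)) = - m" by simp
  have "t = IdL" using t ppt by (auto simp: potential_def)
  then show ?thesis using t bp weight u sd by auto
qed

lemma path_weights_words: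
  assumes "set cs \<subseteq> pbasis" "is_path IdO cs IdL" "sum_list (map degb cs) = - m"
  shows "map weight cs \<in> words (length cs) (1 - 2 * m)"
proof -
  have "int (sum_list (map weight cs)) = 2 * (- m) + 1"
    using is_path_pot[OF assms(2,1)] assms(3) by (simp add: potential_def)
  moreover have "set (map weight cs) \<subseteq> {1, 2}" by (auto simp: weight_def)
  ultimately show ?thesis by (simp add: words_def)
qed

lemma path_of_merge:
  assumes "s \<in> {IdO, IdL}" "a \<in> {1, 2}" "b \<in> {1, 2}"
  shows "bmul (letter s a) (letter (tgt (letter s a)) b) = (if a = 1 \<and> b = 1 then Some (letter s 2) else None)
     \<and> (a = 1 \<and> b = 1 \<longrightarrow> tgt (letter s 2) = tgt (letter (tgt (letter s a)) b))"
  using assms by (auto simp: letter_def)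

section \<open>The word complex\<close>

(* The differential on functions of words: with alternating signs, merge each pair of
   adjacent letters 1 1 into the letter 2.  It is the Hochschild differential
   transported to words (merge_diff_path_of below). *)
fun wdiff :: "(nat list \<Rightarrow> 'k::field) \<Rightarrow> nat list \<Rightarrow> 'k" where
  "wdiff g [] = 0"
| "wdiff g [a] = 0"
| "wdiff g (a # b # v) = (if a = 1 \<and> b = 1 then - g (2 # v) else 0) - wdiff (\<lambda>u. g (a # u)) (b # v)"

lemma wdiff_cons: "wdiff h (a # v) = (case v of [] \<Rightarrow> 0 | b # v' \<Rightarrow> if a = 1 \<and> b = 1 then - h (2 # v') else 0)
   - wdiff (\<lambda>u. h (a # u)) v"
  by (cases v) auto

lemma wdiff_11: "wdiff h (1 # 1 # v) = - h (2 # v) - wdiff (\<lambda>u. h (1 # u)) (1 # v)" by simp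

lemma wdiff_12: "wdiff h (1 # 2 # v) = wdiff (\<lambda>u. h (1 # 2 # u)) v"
  by (simp add: wdiff_cons[of _ 2 v] split: list.splits)

lemma wdiff_2: "wdiff h (2 # v) = - wdiff (\<lambda>u. h (2 # u)) v"
  by (simp add: wdiff_cons[of _ 2 v] split: list.splits)

lemma wdiff_1: "wdiff h (1 # v) = (case v of [] \<Rightarrow> 0 | b # v' \<Rightarrow> if b = 1 then - h (2 # v') else 0)
   - wdiff (\<lambda>u. h (1 # u)) v"
  by (simp add: wdiff_cons[of _ 1 v] split: list.splits)

lemma wdiff_add: "wdiff (\<lambda>u. f u + h u) w = wdiff f w + wdiff h w"
proof (induction w arbitrary: f h)
  case (Cons a w) then show ?case by (cases w) auto
qed simp

lemma wdiff_scale: "wdiff (\<lambda>u. s * f u) w = s * wdiff f w"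
proof (induction w arbitrary: f)
  case (Cons a w) then show ?case by (cases w) (auto simp: algebra_simps)
qed simp

lemma wdiff_diff: "wdiff (\<lambda>u. f u - h u) w = wdiff f w - wdiff h w"
proof (induction w arbitrary: f h)
  case (Cons a w) then show ?case by (cases w) auto
qed simp

lemma wdiff_neg: "wdiff (\<lambda>u. - f u) w = - wdiff f w"
proof (induction w arbitrary: f)
  case (Cons a w) then show ?case by (cases w) auto
qed simp

lemma wdiff_zero: "wdiff (\<lambda>_. 0) w = 0"
  using wdiff_scale[of 0 "\<lambda>_. 0" w] by simp

lemma wdiff_cong: "set u \<subseteq> {1, 2} \<Longrightarrow> (\<And>v. set v \<subseteq> {1, 2} \<Longrightarrow> length v + 1 = length u \<Longrightarrow> sum_list v = sum_list u \<Longrightarrow> h v = h' v)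
   \<Longrightarrow> wdiff h u = wdiff h' u"
proof (induction u arbitrary: h h')
  case Nil then show ?case by simp
next
  case (Cons a v)
  have 1: "wdiff (\<lambda>u. h (a # u)) v = wdiff (\<lambda>u. h' (a # u)) v"
    by (rule Cons.IH) (use Cons.prems in auto)
  have 2: "(case v of [] \<Rightarrow> 0 | b # v' \<Rightarrow> if a = 1 \<and> b = 1 then - h (2 # v') else 0) =
           (case v of [] \<Rightarrow> 0 | b # v' \<Rightarrow> if a = 1 \<and> b = 1 then - h' (2 # v') else 0)"
    using Cons.prems by (auto split: list.splits)
  show ?case by (simp only: wdiff_cons[of _ a v] 1 2)
qed

lemma wdiff_wdiff: "wdiff (wdiff g) w = 0"
proof (induction g w rule: wdiff.induct)
  case (1 g) then show ?case by simp
next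
  case (2 g a) then show ?case by simp
next
  case (3 g a b v)
  define K where "K u = (case u of [] \<Rightarrow> 0 | b' # v' \<Rightarrow> if a = 1 \<and> b' = 1 then - g (2 # v') else 0)" for u
  have e1: "(\<lambda>u. wdiff g (a # u)) = (\<lambda>u. K u - wdiff (\<lambda>u'. g (a # u')) u)"
    by (rule ext) (simp add: wdiff_cons[of _ a] K_def)
  have e2: "wdiff (\<lambda>u. wdiff g (a # u)) (b # v) = wdiff K (b # v)"
    unfolding e1 wdiff_diff using 3 by simp
  have e3: "wdiff K (b # v) = (case v of [] \<Rightarrow> 0 | c # v' \<Rightarrow> if b = 1 \<and> c = 1 then - K (2 # v') else 0)
     - wdiff (\<lambda>u. K (b # u)) v" by (rule wdiff_cons)
  have e5: "wdiff g (2 # v) = - wdiff (\<lambda>u. g (2 # u)) v" by (rule wdiff_2)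
  show ?case
  proof (cases v)
    case Nil then show ?thesis by simp
  next
    case (Cons c v')
    have k2: "K (2 # v') = 0" for v' by (simp add: K_def)
    have e3': "wdiff K (b # v) = - wdiff (\<lambda>u. K (b # u)) v"
      using e3 Cons k2 by simp
    show ?thesis
    proof (cases "a = 1 \<and> b = 1")
      case True
      have e4: "(\<lambda>u. K (b # u)) = (\<lambda>u. - g (2 # u))"
        using True by (intro ext) (simp add: K_def)
      have "wdiff (wdiff g) (a # b # v) = - wdiff g (2 # v) - wdiff K (b # v)" using True e2 by simp
      also have "\<dots> = 0" using e3' e5 by (simp add: e4 wdiff_neg)
      finally show ?thesis .
    next
      case False
      have e4: "(\<lambda>u. K (b # u)) = (\<lambda>u. 0)"
        using False by (intro ext) (auto simp: K_def)
      have "wdiff (wdiff g) (a # b # v) = - wdiff K (b # v)" using False e2 by auto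
      also have "\<dots> = 0" using e3' by (simp add: e4 wdiff_zero)
      finally show ?thesis .
    qed
  qed
qed

(* The bidegrees (n, l) in which the word complex has cohomology, and the word
   1 2 1 2 ... representing it. *)
definition critical :: "nat \<Rightarrow> int \<Rightarrow> bool" where
  "critical n l \<longleftrightarrow> (even n \<and> 2 * l = 3 * int n) \<or> (odd n \<and> 2 * l = 3 * int n - 1)"

fun crit_word :: "nat \<Rightarrow> nat list" where
  "crit_word 0 = []" | "crit_word (Suc 0) = [1]" | "crit_word (Suc (Suc n)) = 1 # 2 # crit_word n"

lemma crit_word_props: "length (crit_word n) = n \<and> set (crit_word n) \<subseteq> {1, 2} \<and>
   2 * int (sum_list (crit_word n)) = 3 * int n - (if odd n then 1 else 0)"
  by (induction n rule: crit_word.induct) auto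

lemma crit_word_words: "critical n l \<Longrightarrow> crit_word n \<in> words n l"
  using crit_word_props[of n] by (auto simp: critical_def words_def)

lemma critical_step: "critical (Suc (Suc n)) l \<longleftrightarrow> critical n (l - 3)"
  by (auto simp: critical_def)

(* The cocycles on the critical word are not coboundaries: wdiff vanishes there. *)
lemma wdiff_crit_word: "wdiff \<psi> (crit_word n) = 0"
proof (induction n arbitrary: \<psi> rule: crit_word.induct)
  case (3 n) then show ?case by (simp only: crit_word.simps wdiff_12)
qed simp_all

(* A primitive of g, built from a primitive eta of g on words beginning with 1 2.  It is
   used in the inductive proof that non-critical cocycles are coboundaries. *)
definition primitive :: "(nat list \<Rightarrow> 'k::field) \<Rightarrow> (nat list \<Rightarrow> 'k) \<Rightarrow> nat list \<Rightarrow> 'k" where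
  "primitive g \<eta> x =
     (if x \<noteq> [] \<and> hd x = 2 then - g (1 # 1 # tl x) + (if tl x \<noteq> [] \<and> hd (tl x) = 1 then \<eta> (tl (tl x)) else 0)
      else if x \<noteq> [] \<and> hd x = 1 \<and> tl x \<noteq> [] \<and> hd (tl x) = 2 then \<eta> (tl (tl x)) else 0)"

lemma primitive_simps:
  "primitive g \<eta> (2 # v) = - g (1 # 1 # v) + (if v \<noteq> [] \<and> hd v = 1 then \<eta> (tl v) else 0)"
  "primitive g \<eta> (1 # 2 # v) = \<eta> v"
  "primitive g \<eta> (Suc 0 # 2 # v) = \<eta> v"
  "primitive g \<eta> (1 # 1 # v) = 0"
  "primitive g \<eta> [1] = 0"
  by (simp_all add: primitive_def)

lemma wdiff_primitive_11: "wdiff (primitive g \<eta>) (1 # 1 # v) = g (1 # 1 # v)"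
proof -
  have "wdiff (\<lambda>u. primitive g \<eta> (1 # u)) (1 # v) =
        (case v of [] \<Rightarrow> 0 | b # v' \<Rightarrow> if b = 1 then - primitive g \<eta> (1 # 2 # v') else 0)
        - wdiff (\<lambda>u. primitive g \<eta> (1 # 1 # u)) v" by (rule wdiff_1)
  also have "(\<lambda>u. primitive g \<eta> (1 # 1 # u)) = (\<lambda>u. 0)" by (simp add: primitive_def)
  finally have "wdiff (\<lambda>u. primitive g \<eta> (1 # u)) (1 # v) =
        (case v of [] \<Rightarrow> 0 | b # v' \<Rightarrow> if b = 1 then - \<eta> v' else 0)"
    by (simp add: wdiff_zero primitive_simps split: list.splits)
  then show ?thesis by (simp only: wdiff_11) (simp add: primitive_simps split: list.splits)
qed

lemma wdiff_primitive_12: "wdiff (primitive g \<eta>) (1 # 2 # v) = wdiff \<eta> v"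
  by (simp only: wdiff_12 primitive_simps)

lemma wdiff_primitive_2:
  assumes coc: "wdiff g (1 # 1 # b # v) = 0" and b: "b = 1 \<or> b = 2"
    and eta: "b = 1 \<Longrightarrow> wdiff \<eta> v = g (1 # 2 # v)"
  shows "wdiff (primitive g \<eta>) (2 # b # v) = g (2 # b # v)"
proof -
  define E where "E u = (if u \<noteq> [] \<and> hd u = 1 then \<eta> (tl u) else 0)" for u
  have "(\<lambda>u. primitive g \<eta> (2 # u)) = (\<lambda>u. - g (1 # 1 # u) + E u)"
    by (simp add: primitive_simps E_def)
  then have s1: "wdiff (primitive g \<eta>) (2 # b # v) = wdiff (\<lambda>u. g (1 # 1 # u)) (b # v) - wdiff E (b # v)"
    by (simp only: wdiff_2 wdiff_add wdiff_neg) simp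
  have "wdiff g (1 # 1 # b # v) = - g (2 # b # v) - wdiff (\<lambda>u. g (1 # u)) (1 # b # v)" by (rule wdiff_11)
  moreover have "wdiff (\<lambda>u. g (1 # u)) (1 # b # v) = (if b = 1 then - g (1 # 2 # v) else 0)
       - wdiff (\<lambda>u. g (1 # 1 # u)) (b # v)" by (simp only: wdiff_1 list.case)
  ultimately have s2: "wdiff (\<lambda>u. g (1 # 1 # u)) (b # v) = g (2 # b # v) - (if b = 1 then g (1 # 2 # v) else 0)"
    using coc by (simp add: algebra_simps split: if_splits)
  have s3: "wdiff E (b # v) = (if b = 1 then - g (1 # 2 # v) else 0)"
  proof (cases "b = 1")
    case True
    have "wdiff E (1 # v) = (case v of [] \<Rightarrow> 0 | c # w \<Rightarrow> if c = 1 then - E (2 # w) else 0) - wdiff (\<lambda>u. E (1 # u)) v"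
      by (rule wdiff_1)
    also have "(\<lambda>u. E (1 # u)) = \<eta>" by (rule ext) (simp add: E_def)
    finally have "wdiff E (1 # v) = - wdiff \<eta> v" by (simp add: E_def split: list.splits)
    then show ?thesis using True eta by simp
  next
    case False
    then have "b = 2" using b by simp
    moreover have "(\<lambda>u. E (2 # u)) = (\<lambda>u. 0)" by (rule ext) (simp add: E_def)
    ultimately show ?thesis by (simp only: wdiff_2 wdiff_zero) simp
  qed
  show ?thesis using s1 s2 s3 by simp
qed

lemma words_short:
  assumes "x \<in> words n l" "length x \<le> 1"
  shows "critical n l \<and> (x = [] \<or> x = [1]) \<or> x = [2] \<and> [1, 1] \<in> words (Suc n) l"
  using assms by (auto simp: words_def critical_def length_Suc_conv le_Suc_eq)

lemma wdiff_primitive: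
  assumes coc: "\<forall>w\<in>words (Suc n) l. wdiff g w = 0" and cr: "critical n l \<Longrightarrow> g (crit_word n) = 0"
    and eta: "\<And>v. v \<in> words (n - 2) (l - 3) \<Longrightarrow> 2 \<le> n \<Longrightarrow> wdiff \<eta> v = g (1 # 2 # v)"
    and x: "x \<in> words n l"
  shows "wdiff (primitive g \<eta>) x = g x"
proof (cases "length x \<le> 1")
  case True
  then consider "critical n l" "x = [] \<or> x = [1]" | "x = [2]" "[1, 1] \<in> words (Suc n) l"
    using words_short[OF x] by blast
  then show ?thesis
  proof cases
    case 1
    then have "x = crit_word n" using x by (auto simp: words_def)
    then show ?thesis using 1 cr by auto
  next
    case 2
    then show ?thesis using coc by auto
  qed
next
  case False
  then obtain a b v where xv: "x = a # b # v"
    by (metis One_nat_def length_0_conv length_Cons le_Suc_eq le_zero_eq list.exhaust)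
  have ab: "a = 1 \<or> a = 2" "b = 1 \<or> b = 2" using x xv by (auto simp: words_def)
  have v3: "v \<in> words (n - 2) (l - 3)" "2 \<le> n" if "a + b = 3"
    using x xv that by (auto simp: words_def)
  consider "a = 1" "b = 1" | "a = 1" "b = 2" | "a = 2" using ab by auto
  then show ?thesis
  proof cases
    case 1
    then show ?thesis by (simp only: xv wdiff_primitive_11)
  next
    case 2
    then show ?thesis using eta v3 by (simp only: xv wdiff_primitive_12)
  next
    case 3
    have "1 # 1 # b # v \<in> words (Suc n) l" using x xv 3 by (auto simp: words_def)
    then have "wdiff g (1 # 1 # b # v) = 0" using coc by blast
    moreover have "b = 1 \<Longrightarrow> wdiff \<eta> v = g (1 # 2 # v)" using eta v3 3 by simp
    ultimately show ?thesis unfolding xv 3 by (rule wdiff_primitive_2[OF _ ab(2)])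
  qed
qed

(* By induction on the length, a primitive on words
   beginning with 1 2 exists, and wdiff_primitive extends it to all words. *)
lemma wdiff_exact:
  "(\<forall>w\<in>words (Suc n) l. wdiff g w = 0) \<Longrightarrow> (critical n l \<Longrightarrow> g (crit_word n) = 0) \<Longrightarrow>
   \<exists>\<psi>. \<forall>w\<in>words n l. wdiff \<psi> w = g w"
proof (induction n arbitrary: l g rule: less_induct)
  case (less n)
  note coc = less.prems(1) and cr = less.prems(2)
  obtain \<eta> where eta: "\<And>v. v \<in> words (n - 2) (l - 3) \<Longrightarrow> 2 \<le> n \<Longrightarrow> wdiff \<eta> v = g (1 # 2 # v)"
  proof (cases "2 \<le> n")
    case True
    then obtain n' where n': "n = Suc (Suc n')" by (metis add_2_eq_Suc le_Suc_ex)
    have "\<forall>v\<in>words (Suc n') (l - 3). wdiff (\<lambda>v. g (1 # 2 # v)) v = 0"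
    proof
      fix v assume v: "v \<in> words (Suc n') (l - 3)"
      then have "1 # 2 # v \<in> words (Suc n) l" using n' by (auto simp: words_def)
      then have "wdiff g (1 # 2 # v) = 0" using coc by blast
      then show "wdiff (\<lambda>v. g (1 # 2 # v)) v = 0" by (simp only: wdiff_12)
    qed
    moreover have "critical n' (l - 3) \<Longrightarrow> g (1 # 2 # crit_word n') = 0"
      using cr n' critical_step by force
    ultimately obtain \<eta> where "\<forall>w\<in>words n' (l - 3). wdiff \<eta> w = g (1 # 2 # w)"
      using less.IH[of n' "l - 3" "\<lambda>v. g (1 # 2 # v)"] n' by auto
    then show ?thesis using n' by (intro that) auto
  next
    case False then show ?thesis by (intro that[of "\<lambda>_. 0"]) auto
  qed
  then show ?case using wdiff_primitive[OF coc cr] by blast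
qed

(* In critical bidegrees some cocycle takes the value 1 at the critical word.  It is
   built from a cocycle chi in bidegree (n, l - 3) by prefixing 1 2 or 2 1. *)
definition prefix_12 :: "(nat list \<Rightarrow> 'k::field) \<Rightarrow> nat list \<Rightarrow> 'k" where
  "prefix_12 \<chi> x = (if length x \<ge> 2 \<and> ((hd x = 1 \<and> hd (tl x) = 2) \<or> (hd x = 2 \<and> hd (tl x) = 1))
                     then \<chi> (tl (tl x)) else 0)"

lemma prefix_12_simps:
  "prefix_12 \<chi> (1 # 2 # v) = \<chi> v" "prefix_12 \<chi> (2 # 1 # v) = \<chi> v"
  "prefix_12 \<chi> (1 # 1 # v) = 0" "prefix_12 \<chi> (2 # 2 # v) = 0"
  by (simp_all add: prefix_12_def)

lemma prefix_12_cocycle: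
  assumes chi: "\<forall>w\<in>words (Suc n) (l - 3). wdiff \<chi> w = 0" and x: "x \<in> words (Suc (Suc (Suc n))) l"
  shows "wdiff (prefix_12 \<chi>) x = 0"
proof -
  obtain a b v where xv: "x = a # b # v" using x by (auto simp: words_def length_Suc_conv)
  have ab: "a \<in> {1,2}" "b \<in> {1,2}" using x xv by (auto simp: words_def)
  have vW: "v \<in> words (Suc n) (l - int a - int b)" using x xv by (auto simp: words_def)
  consider "a = 1" "b = 1" | "a = 1" "b = 2" | "a = 2" "b = 1" | "a = 2" "b = 2" using ab by auto
  then show ?thesis
  proof cases
    case 1
    have "wdiff (\<lambda>u. prefix_12 \<chi> (1 # u)) (1 # v) =
        (case v of [] \<Rightarrow> 0 | b # v'' \<Rightarrow> if b = 1 then - prefix_12 \<chi> (1 # 2 # v'') else 0)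
        - wdiff (\<lambda>u. prefix_12 \<chi> (1 # 1 # u)) v" by (rule wdiff_1)
    also have "(\<lambda>u. prefix_12 \<chi> (1 # 1 # u)) = (\<lambda>u. 0)" by (simp add: prefix_12_def)
    finally have "wdiff (\<lambda>u. prefix_12 \<chi> (1 # u)) (1 # v) = (case v of [] \<Rightarrow> 0 | b # v'' \<Rightarrow> if b = 1 then - \<chi> v'' else 0)"
      by (simp add: wdiff_zero prefix_12_def split: list.splits)
    then show ?thesis using 1 xv by (simp only: wdiff_11) (simp add: prefix_12_def split: list.splits)
  next
    case 2
    then show ?thesis using vW xv chi by (simp only: wdiff_12 prefix_12_simps) simp
  next
    case 3
    have "(\<lambda>u. prefix_12 \<chi> (2 # u)) = (\<lambda>u. if u \<noteq> [] \<and> hd u = 1 then \<chi> (tl u) else 0)"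
    proof
      fix u show "prefix_12 \<chi> (2 # u) = (if u \<noteq> [] \<and> hd u = 1 then \<chi> (tl u) else 0)"
        by (cases u) (auto simp: prefix_12_def)
    qed
    moreover have "wdiff (\<lambda>u. if u \<noteq> [] \<and> hd u = 1 then \<chi> (tl u) else 0) (1 # v) = - wdiff \<chi> v"
      by (simp only: wdiff_1) (simp split: list.splits)
    ultimately show ?thesis using 3 vW xv chi by (simp only: wdiff_2) simp
  next
    case 4
    have "(\<lambda>u. prefix_12 \<chi> (2 # 2 # u)) = (\<lambda>u. 0)" by (simp add: prefix_12_simps)
    then show ?thesis using 4 xv by (simp only: wdiff_2 wdiff_zero) simp
  qed
qed

lemma critical_cocycle: "critical n l \<Longrightarrow> \<exists>g::nat list \<Rightarrow> 'k::field. (\<forall>w\<in>words (Suc n) l. wdiff g w = 0) \<and> g (crit_word n) = 1"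
proof (induction n arbitrary: l rule: crit_word.induct)
  case 1
  show ?case by (intro exI[of _ "\<lambda>w. if w = [] then 1 else 0"]) (auto simp: words_def length_Suc_conv)
next
  case 2
  show ?case by (intro exI[of _ "\<lambda>w. if w = [1] then 1 else 0"]) (auto simp: words_def length_Suc_conv)
next
  case (3 n)
  then have "critical n (l - 3)" by (simp add: critical_step)
  from 3(1)[OF this] obtain \<chi> :: "nat list \<Rightarrow> 'k"
    where chi: "\<forall>w\<in>words (Suc n) (l - 3). wdiff \<chi> w = 0" "\<chi> (crit_word n) = 1" by blast
  have "\<forall>w\<in>words (Suc (Suc (Suc n))) l. wdiff (prefix_12 \<chi>) w = 0"
    using prefix_12_cocycle[OF chi(1)] by blast
  moreover have "prefix_12 \<chi> (crit_word (Suc (Suc n))) = 1" using chi by (simp add: prefix_12_def)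
  ultimately show ?case by blast
qed

lemma cochain_off: "\<phi> \<in> cochains n m \<Longrightarrow> \<not> (length as = n \<and> set as \<subseteq> Bplus) \<Longrightarrow> \<phi> as = 0"
  by (simp add: cochains_def)

lemma cochain_add: "\<phi> \<in> cochains n m \<Longrightarrow> length as = n \<Longrightarrow> set as \<subseteq> Bplus \<Longrightarrow> i < n \<Longrightarrow> x \<in> Bplus \<Longrightarrow> y \<in> Bplus \<Longrightarrow>
   \<phi> (as[i := (\<lambda>c. x c + y c)]) = \<phi> (as[i := x]) + \<phi> (as[i := y])"
  unfolding cochains_def by blast

lemma cochain_scale: "\<phi> \<in> cochains n m \<Longrightarrow> length as = n \<Longrightarrow> set as \<subseteq> Bplus \<Longrightarrow> i < n \<Longrightarrow> x \<in> Bplus \<Longrightarrow>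
   \<phi> (as[i := (\<lambda>c. s * x c)]) = s * \<phi> (as[i := x])"
  unfolding cochains_def by blast

lemma cochain_bal: "\<phi> \<in> cochains n m \<Longrightarrow> length as = n \<Longrightarrow> set as \<subseteq> Bplus \<Longrightarrow> Suc i < n \<Longrightarrow> r \<in> Rset \<Longrightarrow>
   \<phi> (as[i := bmult (as ! i) r]) = \<phi> (as[Suc i := bmult r (as ! Suc i)])"
  unfolding cochains_def by blast

lemma cochain_lr: "\<phi> \<in> cochains n m \<Longrightarrow> length as = n \<Longrightarrow> set as \<subseteq> Bplus \<Longrightarrow> 0 < n \<Longrightarrow> r \<in> Rset \<Longrightarrow>
   \<phi> (as[0 := bmult r (as ! 0)]) = lact r (\<phi> as) \<and> \<phi> (as[n - 1 := bmult (as ! (n - 1)) r]) = ract (\<phi> as) r"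
  unfolding cochains_def by blast

lemma cochain_zero: "\<phi> \<in> cochains 0 m \<Longrightarrow> r \<in> Rset \<Longrightarrow> lact r (\<phi> []) = ract (\<phi> []) r"
  unfolding cochains_def by blast

lemma cochain_deg: "\<phi> \<in> cochains n m \<Longrightarrow> length as = n \<Longrightarrow> set as \<subseteq> Bplus \<Longrightarrow> list_all2 homog ds as \<Longrightarrow>
        \<phi> as \<in> Mdeg (sum_list ds + m)"
  unfolding cochains_def by blast

section \<open>Cochains from functions on words\<close>

definition path_fun :: "nat \<Rightarrow> int \<Rightarrow> (nat list \<Rightarrow> 'k::field) \<Rightarrow> bas list \<Rightarrow> 'k" where
  "path_fun n m g cs = (if set cs \<subseteq> pbasis \<and> is_path IdO cs IdL \<and> map weight cs \<in> words n (1 - 2 * m) then g (map weight cs) else 0)"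

definition cochain_of :: "nat \<Rightarrow> int \<Rightarrow> (nat list \<Rightarrow> 'k::field) \<Rightarrow> 'k B list \<Rightarrow> 'k" where
  "cochain_of n m g = (\<lambda>as. if length as = n \<and> set as \<subseteq> Bplus then mlin (path_fun n m g) as else 0)"

lemma path_fun_supp:
  assumes "path_fun n m g cs \<noteq> 0"
  shows "set cs \<subseteq> pbasis \<and> is_path IdO cs IdL \<and> length cs = n \<and> sum_list (map degb cs) = - m"
proof -
  have h: "set cs \<subseteq> pbasis" "is_path IdO cs IdL" "map weight cs \<in> words n (1 - 2 * m)"
    using assms by (auto simp: path_fun_def split: if_splits)
  have "int (sum_list (map weight cs)) = 2 * sum_list (map degb cs) + potential IdL - potential IdO"
    using is_path_pot[OF h(2) h(1)] .
  moreover have "int (sum_list (map weight cs)) = 1 - 2 * m" "length cs = n" using h(3) by (auto simp: words_def)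
  ultimately show ?thesis using h by (simp add: potential_def)
qed

lemma path_fun_path_of: "u \<in> words n (1 - 2 * m) \<Longrightarrow> path_fun n m g (path_of IdO u) = g u"
  using path_of_words[of u n m] by (simp add: path_fun_def)

lemma cochain_of_tuple:
  "length as = n \<Longrightarrow> set as \<subseteq> Bplus \<Longrightarrow> cochain_of n m g as = mlin (path_fun n m g) as"
  by (simp add: cochain_of_def)

(* On the support of path_fun, consecutive arrows match and the path runs from idO to
   idL; this is what makes cochain_of R-balanced and R-linear. *)
lemma path_fun_junctions:
  assumes "path_fun n m g cs \<noteq> 0"
  shows "Suc i < n \<Longrightarrow> tgt (cs!i) = src (cs!Suc i)"
    and "0 < n \<Longrightarrow> src (cs!0) = IdO"
    and "0 < n \<Longrightarrow> tgt (cs!(n-1)) = IdL"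
  using path_fun_supp[OF assms] is_path_nth[of IdO cs IdL] by (auto split: if_split_asm)

lemma cochain_of_add:
  "length as = n \<Longrightarrow> set as \<subseteq> Bplus \<Longrightarrow> i < n \<Longrightarrow> x \<in> Bplus \<Longrightarrow> y \<in> Bplus \<Longrightarrow>
   cochain_of n m g (as[i := \<lambda>c. x c + y c]) = cochain_of n m g (as[i := x]) + cochain_of n m g (as[i := y])"
  by (simp add: cochain_of_tuple set_update_sub Bplus_add mlin_upd_add)

lemma cochain_of_scale:
  assumes h: "length as = n" "set as \<subseteq> Bplus" "i < n" "x \<in> Bplus"
  shows "cochain_of n m g (as[i := \<lambda>c. s * x c]) = s * cochain_of n m g (as[i := x])"
proof -
  have "mlin (path_fun n m g) ((as[i := x])[i := \<lambda>c. (\<lambda>_. s) c * ((as[i := x]) ! i) c]) =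
        mlin (\<lambda>cs. (\<lambda>_. s) (cs!i) * path_fun n m g cs) (as[i:=x])"
    by (rule mlin_upd_weight) (use h in simp)
  then show ?thesis using h by (simp add: cochain_of_tuple set_update_sub Bplus_scale mlin_scale)
qed

lemma cochain_of_balanced:
  assumes h: "length as = n" "set as \<subseteq> Bplus" "Suc i < n" "r \<in> Rset"
  shows "cochain_of n m g (as[i := bmult (as ! i) r]) = cochain_of n m g (as[Suc i := bmult r (as ! Suc i)])"
proof -
  let ?G = "path_fun n m g"
  have bi: "as!i \<in> Bplus" "as!Suc i \<in> Bplus" using h by (auto dest: nth_mem)
  have "cochain_of n m g (as[i := bmult (as ! i) r]) = mlin ?G (as[i := bmult (as ! i) r])"
    using h bi by (simp add: cochain_of_tuple set_update_sub bmult_Bplus)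
  also have "\<dots> = mlin ?G (as[i := \<lambda>c. r (tgt c) * (as!i) c])"
    using h bi by (simp add: bmult_right_R)
  also have "\<dots> = mlin (\<lambda>cs. r (tgt (cs!i)) * ?G cs) as" using h by (simp add: mlin_upd_weight)
  also have "\<dots> = mlin (\<lambda>cs. r (src (cs!Suc i)) * ?G cs) as"
  proof (rule mlin_cong)
    fix cs :: "bas list" assume "length cs = length as"
    then show "r (tgt (cs!i)) * ?G cs = r (src (cs!Suc i)) * ?G cs"
      using path_fun_junctions(1)[of n m g cs i] h by (cases "?G cs = 0") auto
  qed
  also have "\<dots> = mlin ?G (as[Suc i := \<lambda>c. r (src c) * (as!Suc i) c])" using h by (simp add: mlin_upd_weight)
  also have "\<dots> = cochain_of n m g (as[Suc i := bmult r (as ! Suc i)])"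
    using h bi by (simp add: cochain_of_tuple set_update_sub bmult_left_R Bplus_iff)
  finally show ?thesis .
qed

lemma cochain_of_left:
  assumes h: "length as = n" "set as \<subseteq> Bplus" "0 < n" "r \<in> Rset"
  shows "cochain_of n m g (as[0 := bmult r (as ! 0)]) = lact r (cochain_of n m g as)"
proof -
  let ?G = "path_fun n m g"
  have b0: "as!0 \<in> Bplus" using h by (auto dest: nth_mem)
  have "cochain_of n m g (as[0 := bmult r (as ! 0)]) = mlin ?G (as[0 := \<lambda>c. r (src c) * (as!0) c])"
    using h b0 by (simp add: cochain_of_tuple set_update_sub bmult_left_R Bplus_iff)
  also have "\<dots> = mlin (\<lambda>cs. r (src (cs!0)) * ?G cs) as" using h by (simp add: mlin_upd_weight)
  also have "\<dots> = mlin (\<lambda>cs. r IdO * ?G cs) as"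
  proof (rule mlin_cong)
    fix cs :: "bas list" assume "length cs = length as"
    then show "r (src (cs!0)) * ?G cs = r IdO * ?G cs"
      using path_fun_junctions(2)[of n m g cs] h by (cases "?G cs = 0") auto
  qed
  also have "\<dots> = lact r (cochain_of n m g as)" using h by (simp add: mlin_scale lact_formula cochain_of_tuple)
  finally show ?thesis .
qed

lemma cochain_of_right:
  assumes h: "length as = n" "set as \<subseteq> Bplus" "0 < n" "r \<in> Rset"
  shows "cochain_of n m g (as[n - 1 := bmult (as ! (n - 1)) r]) = ract (cochain_of n m g as) r"
proof -
  let ?G = "path_fun n m g"
  have bn: "as!(n-1) \<in> Bplus" using h by (auto dest: nth_mem)
  have "cochain_of n m g (as[n - 1 := bmult (as ! (n - 1)) r]) = mlin ?G (as[n - 1 := bmult (as ! (n - 1)) r])"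
    using h bn by (simp add: cochain_of_tuple set_update_sub bmult_Bplus)
  also have "\<dots> = mlin ?G (as[n - 1 := \<lambda>c. r (tgt c) * (as!(n-1)) c])"
    using h bn by (simp add: bmult_right_R)
  also have "\<dots> = mlin (\<lambda>cs. r (tgt (cs!(n-1))) * ?G cs) as" using h by (simp add: mlin_upd_weight)
  also have "\<dots> = mlin (\<lambda>cs. r IdL * ?G cs) as"
  proof (rule mlin_cong)
    fix cs :: "bas list" assume "length cs = length as"
    then show "r (tgt (cs!(n-1))) * ?G cs = r IdL * ?G cs"
      using path_fun_junctions(3)[of n m g cs] h by (cases "?G cs = 0") auto
  qed
  also have "\<dots> = ract (cochain_of n m g as) r"
    using h by (simp add: mlin_scale ract_formula cochain_of_tuple mult.commute)
  finally show ?thesis .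
qed

(* cochain_of only sees basis tuples of total degree -m, so it is homogeneous of degree m. *)
lemma cochain_of_degree:
  assumes h: "length as = n" "set as \<subseteq> Bplus" "list_all2 homog ds as"
  shows "cochain_of n m g as \<in> Mdeg (sum_list ds + m)"
proof (cases "sum_list ds + m = 0")
  case True then show ?thesis by (simp add: Mdeg_def)
next
  case False
  have "mlin (path_fun n m g) as = 0"
  proof (rule mlin_zero)
    fix cs :: "bas list"
    assume c: "length cs = length as" "set cs \<subseteq> pbasis" "\<forall>i<length as. (as ! i) (cs ! i) \<noteq> 0"
    have "ds = map degb cs"
    proof (rule nth_equalityI)
      show "length ds = length (map degb cs)" using h c list_all2_lengthD[of homog ds as] by simp
      fix i assume "i < length ds"
      then have "homog (ds!i) (as!i)" "i < length as" using h by (auto simp: list_all2_conv_all_nth)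
      then show "ds ! i = map degb cs ! i" using c by (auto simp: homog_def)
    qed
    then show "path_fun n m g cs = 0" using path_fun_supp False by fastforce
  qed
  then show ?thesis using h by (simp add: cochain_of_tuple Mdeg_def)
qed

lemma cochain_of_cochain: "cochain_of n m (g :: nat list \<Rightarrow> 'k::field) \<in> cochains n m"
  unfolding cochains_def
proof (intro CollectI conjI allI impI ballI)
  fix as :: "'k B list" assume "\<not> (length as = n \<and> set as \<subseteq> Bplus)"
  then show "cochain_of n m g as = 0" by (auto simp: cochain_of_def)
next
  assume "n = 0"
  then have "cochain_of n m g [] = 0"
    using path_fun_supp[of n m g "[]"] by (auto simp: cochain_of_def)
  then show "lact r (cochain_of n m g []) = ract (cochain_of n m g []) r" for r
    by (simp add: lact_formula ract_formula)
qed (elim conjE, (rule cochain_of_add cochain_of_scale cochain_of_balanced cochain_of_left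
       cochain_of_right cochain_of_degree; assumption))+

lemma cochain_of_eval:
  assumes "u \<in> words n (1 - 2 * m)"
  shows "cochain_of n m g (map bvec (path_of IdO u)) = g u"
proof -
  have w: "set (path_of IdO u) \<subseteq> pbasis" "length (path_of IdO u) = n" using path_of_words[OF assms] by auto
  have "cochain_of n m g (map bvec (path_of IdO u)) = mlin (path_fun n m g) (map bvec (path_of IdO u))"
    unfolding cochain_of_def using w bvec_set[OF w(1)] by auto
  also have "\<dots> = g u" by (simp add: mlin_basis[OF w(1)] path_fun_path_of[OF assms])
  finally show ?thesis .
qed

lemma cochain_of_cong: "(\<And>u. u \<in> words n (1 - 2 * m) \<Longrightarrow> g u = g' u) \<Longrightarrow> cochain_of n m g = cochain_of n m g'"
  unfolding cochain_of_def path_fun_def by (intro ext) (simp cong: if_cong)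

lemma cochain_of_zero: "(\<And>u. u \<in> words n (1 - 2 * m) \<Longrightarrow> g u = 0) \<Longrightarrow> cochain_of n m g = (\<lambda>_. 0)"
  unfolding cochain_of_def path_fun_def by (intro ext) (simp add: mlin_zero_fun cong: if_cong)

section \<open>Every cochain comes from a function on words\<close>

lemma cochain_slot0:
  assumes "\<phi> \<in> cochains n m" "length as = n" "set as \<subseteq> Bplus" "i < n"
  shows "\<phi> (as[i := (\<lambda>_. 0)]) = 0"
proof -
  have "\<phi> (as[i := (\<lambda>c. 0 * (\<lambda>_. 0) c)]) = 0 * \<phi> (as[i := (\<lambda>_. 0)])"
    by (rule cochain_scale[OF assms]) (simp add: Bplus_iff)
  then show ?thesis by simp
qed

lemma cochain_sum:
  assumes "\<phi> \<in> cochains n m" "length as = n" "set as \<subseteq> Bplus" "i < n" "finite C" "\<forall>c\<in>C. F c \<in> Bplus"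
  shows "\<phi> (as[i := (\<lambda>x. \<Sum>c\<in>C. F c x)]) = (\<Sum>c\<in>C. \<phi> (as[i := F c]))"
  using assms(5,6)
proof (induction C rule: finite_induct)
  case empty then show ?case using cochain_slot0[OF assms(1-4)] by simp
next
  case (insert a C)
  have s: "(\<lambda>x. \<Sum>c\<in>C. F c x) \<in> Bplus" using insert by (simp add: Bplus_iff)
  have "\<phi> (as[i := (\<lambda>x. \<Sum>c\<in>insert a C. F c x)]) = \<phi> (as[i := (\<lambda>x. F a x + (\<Sum>c\<in>C. F c x))])"
    using insert by simp
  also have "\<dots> = \<phi> (as[i := F a]) + \<phi> (as[i := (\<lambda>x. \<Sum>c\<in>C. F c x)])"
    by (rule cochain_add[OF assms(1-4)]) (use insert s in auto)
  finally show ?case using insert by simp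
qed

lemma Bplus_decomp: "x \<in> Bplus \<Longrightarrow> x = (\<lambda>y. \<Sum>c\<in>pbasis. x c * bvec c y)"
  apply (rule ext) subgoal for y by (cases y) (auto simp: Bplus_iff pbasis_def bvec_apply) done

lemma cochain_slot_expand:
  assumes "\<phi> \<in> cochains n m" "length as = n" "set as \<subseteq> Bplus" "i < n"
  shows "\<phi> as = (\<Sum>c\<in>pbasis. (as!i) c * \<phi> (as[i := bvec c]))"
proof -
  have ai: "as!i \<in> Bplus" using assms by (auto dest: nth_mem)
  have "\<phi> as = \<phi> (as[i := (\<lambda>y. \<Sum>c\<in>pbasis. (as!i) c * bvec c y)])"
    using Bplus_decomp[OF ai] by (metis list_update_id)
  also have "\<dots> = (\<Sum>c\<in>pbasis. \<phi> (as[i := (\<lambda>y. (as!i) c * bvec c y)]))"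
    by (rule cochain_sum[OF assms]) (auto simp: Bplus_iff bvec_apply pbasis_def)
  also have "\<dots> = (\<Sum>c\<in>pbasis. (as!i) c * \<phi> (as[i := bvec c]))"
    by (rule sum.cong[OF refl], rule cochain_scale[OF assms]) (rule bvec_Bplus)
  finally show ?thesis .
qed

lemma cochain_expand_k:
  assumes "\<phi> \<in> cochains n m" "length as = n" "set as \<subseteq> Bplus" "k \<le> n"
  shows "\<phi> as = mlin (\<lambda>cs. \<phi> (map bvec cs @ drop k as)) (take k as)"
  using assms(4)
proof (induction k)
  case 0 then show ?case by simp
next
  case (Suc k)
  have kn: "k < n" using Suc by simp
  have tk: "take (Suc k) as = take k as @ [as!k]" using kn assms(2) by (simp add: take_Suc_conv_app_nth)
  have "\<phi> as = mlin (\<lambda>cs. \<phi> (map bvec cs @ drop k as)) (take k as)" using Suc by simp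
  also have "\<dots> = mlin (\<lambda>cs. \<Sum>c\<in>pbasis. (as!k) c * \<phi> (map bvec (cs @ [c]) @ drop (Suc k) as)) (take k as)"
  proof (rule mlin_cong)
    fix cs :: "bas list" assume cs: "length cs = length (take k as)" "set cs \<subseteq> pbasis"
    let ?bs = "map bvec cs @ drop k as"
    have lcs: "length cs = k" using cs kn assms(2) by simp
    have bs: "length ?bs = n" "set ?bs \<subseteq> Bplus" using lcs assms(2,3) kn bvec_set[OF cs(2)]
      by (auto dest: in_set_dropD)
    have dk: "drop k as = as!k # drop (Suc k) as" using kn assms(2) by (simp add: Cons_nth_drop_Suc)
    have "?bs ! k = as!k" using lcs dk by (simp add: nth_append)
    moreover have "?bs[k := bvec c] = map bvec (cs @ [c]) @ drop (Suc k) as" for c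
      using lcs dk by (simp add: list_update_append)
    ultimately show "\<phi> ?bs = (\<Sum>c\<in>pbasis. (as!k) c * \<phi> (map bvec (cs @ [c]) @ drop (Suc k) as))"
      using cochain_slot_expand[OF assms(1) bs kn] by simp
  qed
  also have "\<dots> = mlin (\<lambda>cs. \<phi> (map bvec cs @ drop (Suc k) as)) (take (Suc k) as)"
    unfolding tk mlin_snoc by simp
  finally show ?case .
qed

lemma cochain_expand:
  assumes "\<phi> \<in> cochains n m" "length as = n" "set as \<subseteq> Bplus"
  shows "\<phi> as = mlin (\<lambda>cs. \<phi> (map bvec cs)) as"
  using cochain_expand_k[OF assms order_refl] assms(2) by simp

(* The values of a cochain on basis tuples vanish unless the tuple is a path from idO to
   idL of total degree -m.  Each condition is forced by one of the cochain axioms. *)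
lemma cochain_vanish_empty:
  assumes phi: "\<phi> \<in> cochains 0 m"
  shows "\<phi> [] = 0"
proof -
  have "lact (bvec IdO) (\<phi> []) = ract (\<phi> []) (bvec IdO)" using cochain_zero[OF phi] bvec_Rset by auto
  then show ?thesis by (simp add: lact_formula ract_formula bvec_apply)
qed

lemma cochain_vanish_start:
  assumes phi: "\<phi> \<in> cochains n m" and cs: "length cs = n" "set cs \<subseteq> pbasis" "0 < n"
    and s: "src (cs!0) \<noteq> IdO"
  shows "\<phi> (map bvec cs) = 0"
proof -
  let ?as = "map bvec cs"
  have as: "length ?as = n" "set ?as \<subseteq> Bplus" using cs bvec_set by auto
  have c0: "cs!0 \<in> pbasis" using cs by auto
  then have "src (cs!0) = IdL" using src_tgt_pbasis s by auto
  then have "bmult (bvec IdL) (?as!0) = ?as!0" using bmul_src[OF c0] cs by (simp add: bmult_bvec)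
  then have upd: "?as[0 := bmult (bvec IdL) (?as!0)] = ?as" by (metis list_update_id)
  have "\<phi> (?as[0 := bmult (bvec IdL) (?as!0)]) = lact (bvec IdL) (\<phi> ?as)"
    using cochain_lr[OF phi as cs(3) bvec_Rset[of IdL]] by blast
  then have "\<phi> ?as = lact (bvec IdL) (\<phi> ?as)" unfolding upd .
  then show ?thesis by (simp add: lact_formula bvec_apply)
qed

lemma cochain_vanish_end:
  assumes phi: "\<phi> \<in> cochains n m" and cs: "length cs = n" "set cs \<subseteq> pbasis" "0 < n"
    and t: "tgt (cs!(n-1)) \<noteq> IdL"
  shows "\<phi> (map bvec cs) = 0"
proof -
  let ?as = "map bvec cs"
  have as: "length ?as = n" "set ?as \<subseteq> Bplus" using cs bvec_set by auto
  have cn: "cs!(n-1) \<in> pbasis" using cs by auto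
  then have "tgt (cs!(n-1)) = IdO" using src_tgt_pbasis t by auto
  then have "bmult (?as!(n-1)) (bvec IdO) = ?as!(n-1)" using bmul_tgt[OF cn] cs by (simp add: bmult_bvec)
  then have upd: "?as[n-1 := bmult (?as!(n-1)) (bvec IdO)] = ?as" by (metis list_update_id)
  have "\<phi> (?as[n-1 := bmult (?as!(n-1)) (bvec IdO)]) = ract (\<phi> ?as) (bvec IdO)"
    using cochain_lr[OF phi as cs(3) bvec_Rset[of IdO]] by blast
  then have "\<phi> ?as = ract (\<phi> ?as) (bvec IdO)" unfolding upd .
  then show ?thesis by (simp add: ract_formula bvec_apply)
qed

lemma cochain_vanish_junction:
  assumes phi: "\<phi> \<in> cochains n m" and cs: "length cs = n" "set cs \<subseteq> pbasis" "Suc i < n"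
    and j: "tgt (cs!i) \<noteq> src (cs!Suc i)"
  shows "\<phi> (map bvec cs) = 0"
proof -
  let ?as = "map bvec cs" and ?r = "bvec (tgt (cs!i))"
  have as: "length ?as = n" "set ?as \<subseteq> Bplus" using cs bvec_set by auto
  have ci: "cs!i \<in> pbasis" "cs!Suc i \<in> pbasis" using cs by auto
  have ri: "tgt (cs!i) \<in> {IdO, IdL}" using src_tgt_pbasis[OF ci(1)] by auto
  have "bmult (?as!i) ?r = ?as!i" using cs bmul_tgt[OF ci(1)] by (simp add: bmult_bvec)
  then have upd1: "?as[i := bmult (?as!i) ?r] = ?as" by (metis list_update_id)
  have "bmult ?r (?as!Suc i) = (\<lambda>_. 0)"
    using cs bmul_src_none[OF ci(2) ri j] by (simp add: bmult_bvec)
  then have upd2: "?as[Suc i := bmult ?r (?as!Suc i)] = ?as[Suc i := (\<lambda>_. 0)]" by (rule arg_cong)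
  have "\<phi> ?as = \<phi> (?as[Suc i := (\<lambda>_. 0)])"
    using cochain_bal[OF phi as cs(3) bvec_Rset[OF ri]] unfolding upd1 upd2 .
  also have "\<dots> = 0" using cochain_slot0[OF phi as cs(3)] .
  finally show ?thesis .
qed

lemma cochain_vanish_degree:
  assumes phi: "\<phi> \<in> cochains n m" and cs: "length cs = n" "set cs \<subseteq> pbasis"
    and d: "sum_list (map degb cs) \<noteq> - m"
  shows "\<phi> (map bvec cs) = 0"
proof -
  have "list_all2 homog (map degb cs) (map bvec cs)"
    using cs by (auto simp: list_all2_conv_all_nth homog_def bvec_apply split: if_splits)
  then have "\<phi> (map bvec cs) \<in> Mdeg (sum_list (map degb cs) + m)"
    using cochain_deg[OF phi _ bvec_set[OF cs(2)]] cs(1) by auto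
  then show ?thesis using d by (auto simp: Mdeg_def split: if_splits)
qed

lemma cochain_basis_supp:
  assumes phi: "\<phi> \<in> cochains n m" and cs: "length cs = n" "set cs \<subseteq> pbasis" and nz: "\<phi> (map bvec cs) \<noteq> 0"
  shows "is_path IdO cs IdL \<and> sum_list (map degb cs) = - m"
proof -
  have "n \<noteq> 0" using cochain_vanish_empty[of \<phi> m] phi cs nz by auto
  then have "is_path IdO cs IdL"
    unfolding is_path_nth
    using cochain_vanish_start[OF phi cs] cochain_vanish_end[OF phi cs]
      cochain_vanish_junction[OF phi cs] nz cs(1) by auto
  then show ?thesis using cochain_vanish_degree[OF phi cs] nz by blast
qed

lemma cochain_eq_cochain_of:
  assumes phi: "\<phi> \<in> cochains n m"
  shows "\<phi> = cochain_of n m (\<lambda>u. \<phi> (map bvec (path_of IdO u)))"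
proof
  fix as :: "'a B list"
  show "\<phi> as = cochain_of n m (\<lambda>u. \<phi> (map bvec (path_of IdO u))) as"
  proof (cases "length as = n \<and> set as \<subseteq> Bplus")
    case False then show ?thesis using cochain_off[OF phi False] unfolding cochain_of_def by auto
  next
    case True
    have "\<phi> as = mlin (\<lambda>cs. \<phi> (map bvec cs)) as" using cochain_expand[OF phi] True by blast
    also have "\<dots> = mlin (path_fun n m (\<lambda>u. \<phi> (map bvec (path_of IdO u)))) as"
    proof (rule mlin_cong)
      fix cs :: "bas list" assume cs: "length cs = length as" "set cs \<subseteq> pbasis"
      show "\<phi> (map bvec cs) = path_fun n m (\<lambda>u. \<phi> (map bvec (path_of IdO u))) cs"
      proof (cases "\<phi> (map bvec cs) = 0")
        case False
        then have "is_path IdO cs IdL \<and> sum_list (map degb cs) = - m"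
          using cochain_basis_supp[OF phi _ cs(2)] cs True by auto
        then show ?thesis using path_weights_words[of cs m] cs True path_of_weights[of cs IdO IdL] by (simp add: path_fun_def)
      next
        case z: True
        then show ?thesis using path_of_weights[of cs IdO IdL] by (simp add: path_fun_def)
      qed
    qed
    finally show ?thesis using True by (simp add: cochain_of_def)
  qed
qed

section \<open>The Hochschild differential on words\<close>

lemma merge_core:
  assumes "a \<in> Bplus" "b \<in> Bplus"
  shows "(\<Sum>c\<in>pbasis. bmult a b c * E c) =
         (\<Sum>x\<in>pbasis. a x * (\<Sum>y\<in>pbasis. b y * (case bmul x y of Some c \<Rightarrow> E c | None \<Rightarrow> 0)))"
  using assms by (simp add: pbasis_def Bplus_iff bmult_def basis_set_def algebra_simps)

definition merge_at :: "nat \<Rightarrow> (bas list \<Rightarrow> 'k::field) \<Rightarrow> bas list \<Rightarrow> 'k" where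
  "merge_at i G cs = (case bmul (cs!i) (cs!Suc i) of Some c \<Rightarrow> G (take i cs @ [c] @ drop (Suc (Suc i)) cs) | None \<Rightarrow> 0)"

lemma mlin_merge:
  "Suc i < length as \<Longrightarrow> as!i \<in> Bplus \<Longrightarrow> as!Suc i \<in> Bplus \<Longrightarrow>
   mlin G (take i as @ [bmult (as!i) (as!Suc i)] @ drop (Suc (Suc i)) as) = mlin (merge_at i G) as"
proof (induction as arbitrary: i G)
  case Nil then show ?case by simp
next
  case (Cons a as)
  show ?case
  proof (cases i)
    case 0
    then obtain b rest where as: "as = b # rest" using Cons.prems by (cases as) auto
    have ab: "a \<in> Bplus" "b \<in> Bplus" using Cons.prems 0 as by auto
    have "mlin G (take i (a # as) @ [bmult ((a # as)!i) ((a # as)!Suc i)] @ drop (Suc (Suc i)) (a # as))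
        = (\<Sum>c\<in>pbasis. bmult a b c * mlin (\<lambda>cs. G (c # cs)) rest)" using 0 as by simp
    also have "\<dots> = (\<Sum>x\<in>pbasis. a x * (\<Sum>y\<in>pbasis. b y * (case bmul x y of Some c \<Rightarrow> mlin (\<lambda>cs. G (c # cs)) rest | None \<Rightarrow> 0)))"
      by (rule merge_core[OF ab])
    also have "\<dots> = mlin (merge_at i G) (a # as)"
      using 0 as by (auto intro!: sum.cong simp: merge_at_def mlin_zero_fun split: option.splits)
    finally show ?thesis .
  next
    case (Suc j)
    have "mlin (\<lambda>cs. G (c # cs)) (take j as @ [bmult (as!j) (as!Suc j)] @ drop (Suc (Suc j)) as)
          = mlin (merge_at j (\<lambda>cs. G (c # cs))) as" for c
      using Cons.prems Suc by (intro Cons.IH) auto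
    moreover have "merge_at j (\<lambda>cs. G (c # cs)) = (\<lambda>cs. merge_at (Suc j) G (c # cs))" for c
      by (rule ext) (simp add: merge_at_def split: option.splits)
    ultimately show ?thesis using Suc by simp
  qed
qed

fun merge_diff :: "(bas list \<Rightarrow> 'k::field) \<Rightarrow> bas list \<Rightarrow> 'k" where
  "merge_diff G [] = 0"
| "merge_diff G [c] = 0"
| "merge_diff G (c # d # cs) = (case bmul c d of Some x \<Rightarrow> - G (x # cs) | None \<Rightarrow> 0) - merge_diff (\<lambda>v. G (c # v)) (d # cs)"

lemma merge_at_Cons: "merge_at (Suc i) G (c # cs) = merge_at i (\<lambda>v. G (c # v)) cs"
  by (simp add: merge_at_def split: option.splits)

lemma merge_sum: "length cs = Suc n \<Longrightarrow> (\<Sum>i\<in>{1..n}. (-1) ^ i * merge_at (i - 1) G cs) = merge_diff G cs"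
proof (induction n arbitrary: cs G)
  case 0
  then obtain c where "cs = [c]" by (auto simp: length_Suc_conv)
  then show ?case by simp
next
  case (Suc n)
  then obtain c d cs' where cs: "cs = c # d # cs'" by (auto simp: length_Suc_conv)
  have "(\<Sum>i\<in>{1..Suc n}. (-1) ^ i * merge_at (i - 1) G cs) =
        (-1) * merge_at 0 G cs + (\<Sum>i\<in>{Suc 1..Suc n}. (-1) ^ i * merge_at (i - 1) G cs)"
    by (subst sum.atLeast_Suc_atMost) auto
  also have "(\<Sum>i\<in>{Suc 1..Suc n}. (-1) ^ i * merge_at (i - 1) G cs) = (\<Sum>i\<in>{1..n}. (-1) ^ Suc i * merge_at i G cs)"
    by (subst sum.shift_bounds_cl_Suc_ivl) simp
  also have "\<dots> = - (\<Sum>i\<in>{1..n}. (-1) ^ i * merge_at (i - 1) (\<lambda>v. G (c # v)) (d # cs'))"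
    unfolding sum_negf[symmetric]
  proof (rule sum.cong[OF refl])
    fix i assume "i \<in> {1..n}"
    then obtain j where "i = Suc j" by (cases i) auto
    then show "(-1) ^ Suc i * merge_at i G cs = - ((-1) ^ i * merge_at (i - 1) (\<lambda>v. G (c # v)) (d # cs'))"
      using cs by (simp add: merge_at_Cons)
  qed
  also have "(\<Sum>i\<in>{1..n}. (-1) ^ i * merge_at (i - 1) (\<lambda>v. G (c # v)) (d # cs')) = merge_diff (\<lambda>v. G (c # v)) (d # cs')"
    using Suc.prems cs by (intro Suc.IH) simp
  finally show ?case using cs by (simp add: merge_at_def split: option.splits)
qed

lemma merge_diff_path_of:
  "s \<in> {IdO, IdL} \<Longrightarrow> set w \<subseteq> {1, 2} \<Longrightarrow> (\<forall>u. set u \<subseteq> {1, 2} \<longrightarrow> G (path_of s u) = h u) \<Longrightarrow>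
   merge_diff G (path_of s w) = wdiff h w"
proof (induction h w arbitrary: s G rule: wdiff.induct)
  case (1 h) then show ?case by simp
next
  case (2 h a) then show ?case by simp
next
  case (3 h a b v)
  define c where "c = letter s a"
  define d where "d = letter (tgt c) b"
  have ab: "a \<in> {1,2}" "b \<in> {1,2}" using 3 by auto
  have tm: "bmul c d = (if a = 1 \<and> b = 1 then Some (letter s 2) else None)"
     "a = 1 \<and> b = 1 \<longrightarrow> tgt (letter s 2) = tgt d"
    using path_of_merge[OF "3.prems"(1) ab] by (simp_all add: c_def d_def)
  have t: "path_of s (a # b # v) = c # d # path_of (tgt d) v" by (simp add: c_def d_def)
  have IH: "merge_diff (\<lambda>u. G (c # u)) (path_of (tgt c) (b # v)) = wdiff (\<lambda>u. h (a # u)) (b # v)"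
  proof (rule "3.IH")
    show "tgt c \<in> {IdO, IdL}" using tgt_letter[of s a] by (simp add: c_def)
    show "set (b # v) \<subseteq> {1, 2}" using "3.prems" by auto
    show "\<forall>u. set u \<subseteq> {1, 2} \<longrightarrow> G (c # path_of (tgt c) u) = h (a # u)"
    proof (intro allI impI)
      fix u :: "nat list" assume "set u \<subseteq> {1, 2}"
      then have "set (a # u) \<subseteq> {1, 2}" using ab by auto
      then have "G (path_of s (a # u)) = h (a # u)" using "3.prems"(3) by blast
      then show "G (c # path_of (tgt c) u) = h (a # u)" by (simp add: c_def)
    qed
  qed
  have first: "(case bmul c d of Some x \<Rightarrow> - G (x # path_of (tgt d) v) | None \<Rightarrow> 0) =
        (if a = 1 \<and> b = 1 then - h (2 # v) else 0)"
  proof (cases "a = 1 \<and> b = 1")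
    case True
    then have "G (letter s 2 # path_of (tgt d) v) = h (2 # v)"
      using "3.prems" tm(2) by (metis insert_subset insertI2 singletonI list.set(2) path_of.simps(2))
    then show ?thesis using True tm(1) by simp
  qed (use tm in auto)
  have t2: "path_of (tgt c) (b # v) = d # path_of (tgt d) v" by (simp add: d_def)
  show ?case unfolding t merge_diff.simps using IH first unfolding t2 by simp
qed

lemma merge_diff_zero: "merge_diff (\<lambda>_. 0) cs = 0"
proof (induction cs)
  case (Cons c cs) then show ?case by (cases cs) (auto split: option.splits)
qed simp

lemma merge_diff_supp: "(\<forall>cs'. G cs' \<noteq> 0 \<longrightarrow> is_path s cs' t) \<Longrightarrow> merge_diff G cs \<noteq> 0 \<Longrightarrow> is_path s cs t"
proof (induction G cs arbitrary: s rule: merge_diff.induct)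
  case (1 G) then show ?case by simp
next
  case (2 G c) then show ?case by simp
next
  case (3 G c d cs)
  show ?case
  proof (cases "(case bmul c d of Some x \<Rightarrow> - G (x # cs) | None \<Rightarrow> 0) = 0")
    case False
    then obtain x where "bmul c d = Some x" "G (x # cs) \<noteq> 0" by (auto split: option.splits)
    then show ?thesis using "3.prems"(1) is_path_merge by blast
  next
    case True
    then have nz: "merge_diff (\<lambda>v. G (c # v)) (d # cs) \<noteq> 0" using "3.prems"(2) by simp
    have "\<exists>cs'. G (c # cs') \<noteq> 0"
    proof (rule ccontr)
      assume "\<not> ?thesis"
      then have "(\<lambda>v. G (c # v)) = (\<lambda>_. 0)" by auto
      then show False using nz merge_diff_zero by metis
    qed
    then obtain cs' where "G (c # cs') \<noteq> 0" by blast
    then have lc: "src c = s" using "3.prems"(1) by fastforce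
    have "is_path (tgt c) (d # cs) t"
      by (rule "3.IH"[OF _ nz]) (use "3.prems"(1) in auto)
    then show ?thesis using lc by simp
  qed
qed

lemma merge_diff_path_fun:
  assumes cs: "length cs = Suc n" "set cs \<subseteq> pbasis"
  shows "merge_diff (path_fun n m g) cs = path_fun (Suc n) m (wdiff g) cs"
proof (cases "is_path IdO cs IdL")
  case False
  have "merge_diff (path_fun n m g) cs = 0"
  proof (rule ccontr)
    assume "merge_diff (path_fun n m g) cs \<noteq> 0"
    then have "is_path IdO cs IdL" by (rule merge_diff_supp[rotated]) (use path_fun_supp in blast)
    then show False using False by simp
  qed
  then show ?thesis using False by (simp add: path_fun_def)
next
  case True
  define u where "u = map weight cs"
  have cu: "cs = path_of IdO u" using path_of_weights[OF cs(2) True] by (simp add: u_def)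
  have us: "set u \<subseteq> {1, 2}" "length u = Suc n" using cs by (auto simp: u_def weight_def)
  define gr where "gr v = (if v \<in> words n (1 - 2 * m) then g v else 0)" for v
  have "merge_diff (path_fun n m g) (path_of IdO u) = wdiff (\<lambda>v. path_fun n m g (path_of IdO v)) u"
    by (rule merge_diff_path_of) (use us in auto)
  also have "\<dots> = wdiff gr u"
  proof (rule wdiff_cong[OF us(1)])
    fix v :: "nat list" assume v: "set v \<subseteq> {1, 2}"
    show "path_fun n m g (path_of IdO v) = gr v"
    proof (cases "v \<in> words n (1 - 2 * m)")
      case True then show ?thesis by (simp add: path_fun_path_of gr_def)
    next
      case False
      have "map weight (path_of IdO v) = v" using path_of_props[of IdO v] v by auto
      then show ?thesis using False by (simp add: path_fun_def gr_def)
    qed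
  qed
  also have "\<dots> = path_fun (Suc n) m (wdiff g) cs"
  proof (cases "u \<in> words (Suc n) (1 - 2 * m)")
    case True
    have "wdiff gr u = wdiff g u"
      by (rule wdiff_cong[OF us(1)]) (use True in \<open>auto simp: gr_def words_def\<close>)
    then show ?thesis using True cs True \<open>is_path IdO cs IdL\<close> by (simp add: path_fun_def u_def)
  next
    case False
    have "wdiff gr u = wdiff (\<lambda>_. 0) u"
      by (rule wdiff_cong[OF us(1)]) (use False us in \<open>auto simp: gr_def words_def\<close>)
    then show ?thesis using False by (simp add: path_fun_def u_def wdiff_zero)
  qed
  finally show ?thesis using cu by simp
qed

lemma cochain_of_merge:
  assumes as: "length as = Suc n" "set as \<subseteq> Bplus" and i: "i \<in> {1..n}"
  shows "cochain_of n m g (take (i - 1) as @ [bmult (as ! (i - 1)) (as ! i)] @ drop (Suc i) as)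
         = mlin (merge_at (i - 1) (path_fun n m g)) as"
proof -
  let ?L = "take (i - 1) as @ [bmult (as ! (i - 1)) (as ! i)] @ drop (Suc i) as"
  have nth: "\<And>j. j < Suc n \<Longrightarrow> as!j \<in> Bplus" using as by (auto dest: nth_mem)
  have L: "length ?L = n" "set ?L \<subseteq> Bplus" using as i bmult_Bplus[OF nth[of "i - 1"]]
    by (auto dest: in_set_takeD in_set_dropD)
  have e: "Suc (i - 1) = i" using i by simp
  have "mlin (path_fun n m g) (take (i - 1) as @ [bmult (as ! (i - 1)) (as ! Suc (i - 1))] @ drop (Suc (Suc (i - 1))) as)
        = mlin (merge_at (i - 1) (path_fun n m g)) as"
    by (rule mlin_merge) (use as i nth in auto)
  then show ?thesis using L e by (simp add: cochain_of_def)
qed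

(* The Hochschild differential commutes with cochain_of: the end terms vanish because
   arguments from B_+ annihilate M, the inner terms give the word differential. *)
lemma hdiff_cochain_of: "hdiff n (cochain_of n m g) = cochain_of (Suc n) m (wdiff g)"
proof
  fix as :: "'a B list"
  show "hdiff n (cochain_of n m g) as = cochain_of (Suc n) m (wdiff g) as"
  proof (cases "length as = Suc n \<and> set as \<subseteq> Bplus")
    case False then show ?thesis unfolding hdiff_def cochain_of_def by auto
  next
    case True
    let ?G = "path_fun n m g"
    have nth: "\<And>i. i < Suc n \<Longrightarrow> as!i \<in> Bplus" using True by (auto dest: nth_mem)
    have l0: "lact (as ! 0) x = 0" for x using nth[of 0] by (simp add: lact_formula Bplus_iff)
    have r0: "ract x (as ! n) = 0" for x using nth[of n] by (simp add: ract_formula Bplus_iff)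
    have "hdiff n (cochain_of n m g) as = (\<Sum>i\<in>{1..n}. (-1) ^ i * mlin (merge_at (i - 1) ?G) as)"
      unfolding hdiff_def using True l0 r0 cochain_of_merge[of as n] by simp
    also have "\<dots> = mlin (\<lambda>cs. \<Sum>i\<in>{1..n}. (-1) ^ i * merge_at (i - 1) ?G cs) as"
      by (simp add: mlin_sum mlin_scale)
    also have "\<dots> = mlin (merge_diff ?G) as" by (rule mlin_cong) (use True merge_sum in auto)
    also have "\<dots> = mlin (path_fun (Suc n) m (wdiff g)) as"
      by (rule mlin_cong) (use True merge_diff_path_fun in auto)
    finally show ?thesis using True by (simp add: cochain_of_def)
  qed
qed

section \<open>Cohomology\<close>

lemma words_0_empty: "words 0 (1 - 2 * m) = {}"
  by (auto simp: words_def) presburger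

lemma cocycle_iff:
  assumes phi: "\<phi> \<in> cochains n m"
  shows "hdiff n \<phi> = (\<lambda>_. 0) \<longleftrightarrow> (\<forall>u\<in>words (Suc n) (1 - 2 * m). wdiff (\<lambda>u. \<phi> (map bvec (path_of IdO u))) u = 0)"
proof -
  let ?g = "\<lambda>u. \<phi> (map bvec (path_of IdO u))"
  have h: "hdiff n \<phi> = cochain_of (Suc n) m (wdiff ?g)"
    using cochain_eq_cochain_of[OF phi] hdiff_cochain_of by metis
  show ?thesis
  proof
    assume z: "hdiff n \<phi> = (\<lambda>_. 0)"
    show "\<forall>u\<in>words (Suc n) (1 - 2 * m). wdiff ?g u = 0"
    proof
      fix u assume u: "u \<in> words (Suc n) (1 - 2 * m)"
      have "wdiff ?g u = cochain_of (Suc n) m (wdiff ?g) (map bvec (path_of IdO u))" using cochain_of_eval[OF u, of "wdiff ?g"] by simp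
      moreover have "cochain_of (Suc n) m (wdiff ?g) = (\<lambda>_. 0)" using h z by simp
      ultimately show "wdiff ?g u = 0" by simp
    qed
  next
    assume "\<forall>u\<in>words (Suc n) (1 - 2 * m). wdiff ?g u = 0"
    then show "hdiff n \<phi> = (\<lambda>_. 0)" using h cochain_of_zero by metis
  qed
qed

lemma coboundaries_char:
  "0 < n \<Longrightarrow> (coboundaries n m :: ('k::field B list \<Rightarrow> 'k) set) = range (\<lambda>\<psi>::nat list \<Rightarrow> 'k. cochain_of n m (wdiff \<psi>))"
proof -
  assume n: "0 < n"
  have "hdiff (n - 1) ` (cochains (n - 1) m :: ('k B list \<Rightarrow> 'k) set) = range (\<lambda>\<psi>::nat list \<Rightarrow> 'k. cochain_of n m (wdiff \<psi>))"
  proof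
    show "hdiff (n - 1) ` (cochains (n - 1) m :: ('k B list \<Rightarrow> 'k) set) \<subseteq> range (\<lambda>\<psi>::nat list \<Rightarrow> 'k. cochain_of n m (wdiff \<psi>))"
    proof
      fix x :: "'k B list \<Rightarrow> 'k" assume "x \<in> hdiff (n - 1) ` (cochains (n - 1) m :: ('k B list \<Rightarrow> 'k) set)"
      then obtain \<phi> :: "'k B list \<Rightarrow> 'k" where phi: "\<phi> \<in> cochains (n - 1) m" "x = hdiff (n - 1) \<phi>" by blast
      have "x = cochain_of (Suc (n - 1)) m (wdiff (\<lambda>u. \<phi> (map bvec (path_of IdO u))))"
        using phi cochain_eq_cochain_of[OF phi(1)] hdiff_cochain_of by metis
      then show "x \<in> range (\<lambda>\<psi>::nat list \<Rightarrow> 'k. cochain_of n m (wdiff \<psi>))" using n by simp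
    qed
  next
    show "range (\<lambda>\<psi>::nat list \<Rightarrow> 'k. cochain_of n m (wdiff \<psi>)) \<subseteq> hdiff (n - 1) ` (cochains (n - 1) m :: ('k B list \<Rightarrow> 'k) set)"
    proof
      fix x :: "'k B list \<Rightarrow> 'k" assume "x \<in> range (\<lambda>\<psi>::nat list \<Rightarrow> 'k. cochain_of n m (wdiff \<psi>))"
      then obtain \<psi> :: "nat list \<Rightarrow> 'k" where x: "x = cochain_of n m (wdiff \<psi>)" by blast
      have "x = hdiff (n - 1) (cochain_of (n - 1) m \<psi>)" using x n hdiff_cochain_of[of "n - 1" m \<psi>] by simp
      then show "x \<in> hdiff (n - 1) ` cochains (n - 1) m" using cochain_of_cochain by blast
    qed
  qed
  then show ?thesis using n by (simp add: coboundaries_def)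
qed

lemma coboundaries_subset_cocycles: "(coboundaries n m :: ('k::field B list \<Rightarrow> 'k) set) \<subseteq> cocycles n m"
proof (cases "n = 0")
  case True
  have z: "cochain_of 0 m (\<lambda>_. 0 :: 'k) = (\<lambda>_. 0)" by (rule cochain_of_zero) simp
  have "(\<lambda>_. 0 :: 'k) \<in> cochains 0 m" using cochain_of_cochain[of 0 m "\<lambda>_. 0 :: 'k"] z by simp
  moreover have "hdiff 0 (\<lambda>_::'k B list. 0 :: 'k) = (\<lambda>_. 0)"
    using hdiff_cochain_of[of 0 m "\<lambda>_. 0 :: 'k"] z cochain_of_zero[of "Suc 0" m "wdiff (\<lambda>_. 0 :: 'k)"] wdiff_zero by metis
  ultimately show ?thesis using True by (simp add: coboundaries_def cocycles_def)
next
  case False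
  show ?thesis
  proof
    fix x :: "'k B list \<Rightarrow> 'k" assume "x \<in> (coboundaries n m :: ('k B list \<Rightarrow> 'k) set)"
    then obtain \<psi> :: "nat list \<Rightarrow> 'k" where x: "x = cochain_of n m (wdiff \<psi>)" using coboundaries_char False by blast
    have "hdiff n x = (\<lambda>_. 0)" unfolding x hdiff_cochain_of by (rule cochain_of_zero) (simp add: wdiff_wdiff)
    then show "x \<in> cocycles n m" using x cochain_of_cochain by (simp add: cocycles_def)
  qed
qed

lemma cocycle_in_coboundaries:
  assumes x: "(x :: 'k::field B list \<Rightarrow> 'k) \<in> cocycles n m"
    and c: "critical n (1 - 2 * m) \<Longrightarrow> x (map bvec (path_of IdO (crit_word n))) = 0"
  shows "x \<in> coboundaries n m"
proof -
  let ?g = "\<lambda>u. x (map bvec (path_of IdO u))"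
  have phi: "x \<in> cochains n m" and z: "hdiff n x = (\<lambda>_. 0)" using x by (auto simp: cocycles_def)
  have "\<forall>w\<in>words (Suc n) (1 - 2 * m). wdiff ?g w = 0" using cocycle_iff[OF phi] z by blast
  moreover have "critical n (1 - 2 * m) \<Longrightarrow> ?g (crit_word n) = 0" using c by simp
  ultimately obtain \<psi> :: "nat list \<Rightarrow> 'k" where psi: "\<forall>w\<in>words n (1 - 2 * m). wdiff \<psi> w = ?g w"
    using wdiff_exact[of n "1 - 2 * m" ?g] by blast
  have "cochain_of n m ?g = cochain_of n m (wdiff \<psi>)" by (rule cochain_of_cong) (use psi in simp)
  then have xe: "x = cochain_of n m (wdiff \<psi>)" using cochain_eq_cochain_of[OF phi] by simp
  show ?thesis
  proof (cases "n = 0")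
    case True
    have "cochain_of 0 m (wdiff \<psi>) = (\<lambda>_. 0)" by (rule cochain_of_zero) (use words_0_empty in simp)
    then have "x = (\<lambda>_. 0)" using xe True by simp
    then show ?thesis using True by (simp add: coboundaries_def)
  next
    case False
    then show ?thesis using xe coboundaries_char[of n m] by auto
  qed
qed

(* In critical bidegree, evaluation at the path of the critical word identifies
   HH^n_(m) with k. *)
lemma HH_iso_critical:
  fixes m :: int
  assumes cr: "critical n (1 - 2 * m)"
  shows "HH_iso_k TYPE('k::field) n m"
proof -
  have n0: "n \<noteq> 0"
  proof
    assume "n = 0"
    then have "2 * (1 - 2 * m) = 0" using cr by (simp add: critical_def)
    then show False by presburger
  qed
  have cwW: "crit_word n \<in> words n (1 - 2 * m)" by (rule crit_word_words[OF cr])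
  define f :: "('k B list \<Rightarrow> 'k) \<Rightarrow> 'k" where "f x = x (map bvec (path_of IdO (crit_word n)))" for x
  have surj: "f ` cocycles n m = UNIV"
  proof (intro set_eqI iffI)
    fix s :: 'k
    obtain g :: "nat list \<Rightarrow> 'k" where g: "\<forall>w\<in>words (Suc n) (1 - 2 * m). wdiff g w = 0" "g (crit_word n) = 1"
      using critical_cocycle[OF cr] by blast
    let ?x = "cochain_of n m (\<lambda>u. s * g u)"
    have "hdiff n ?x = (\<lambda>_. 0)" unfolding hdiff_cochain_of
      by (rule cochain_of_zero) (use g in \<open>simp add: wdiff_scale\<close>)
    then have "?x \<in> cocycles n m" using cochain_of_cochain by (simp add: cocycles_def)
    moreover have "f ?x = s" using cochain_of_eval[OF cwW, of "\<lambda>u. s * g u"] g by (simp add: f_def)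
    ultimately show "s \<in> f ` cocycles n m" by force
  qed simp
  have "f x = 0" if x: "x \<in> (coboundaries n m :: ('k B list \<Rightarrow> 'k) set)" for x
  proof -
    have "x \<in> range (\<lambda>\<psi>::nat list \<Rightarrow> 'k. cochain_of n m (wdiff \<psi>))"
      using coboundaries_char[of n m, where 'k='k] n0 x by auto
    then obtain \<psi> :: "nat list \<Rightarrow> 'k" where "x = cochain_of n m (wdiff \<psi>)" by blast
    then show ?thesis using cochain_of_eval[OF cwW, of "wdiff \<psi>"] wdiff_crit_word[of \<psi> n] by (simp add: f_def)
  qed
  then have ker: "{x \<in> cocycles n m. f x = 0} = coboundaries n m"
    using cocycle_in_coboundaries[of _ n m] coboundaries_subset_cocycles[of n m] unfolding f_def by blast
  show ?thesis
    unfolding HH_iso_k_def by (intro exI[of _ f] conjI ballI allI surj ker) (simp_all add: f_def)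
qed

lemma HH_criterion:
  fixes m :: int
  shows "if critical n (1 - 2 * m) then HH_iso_k TYPE('k::field) n m else HH_zero TYPE('k) n m"
proof (cases "critical n (1 - 2 * m)")
  case True
  then show ?thesis using HH_iso_critical[of n m] by simp
next
  case False
  then have "(cocycles n m :: ('k B list \<Rightarrow> 'k) set) = coboundaries n m"
    using coboundaries_subset_cocycles[of n m] cocycle_in_coboundaries[of _ n m] by blast
  then show ?thesis using False by (simp add: HH_zero_def)
qed

lemma critical_gen: "critical n (1 - 2 * (int j - int n)) \<longleftrightarrow> (n + 2 = 4 * j \<or> n + 3 = 4 * j)"
proof -
  have "critical n (1 - 2 * (int j - int n)) \<longleftrightarrow> (n mod 2 = 0 \<and> 2 * (1 - 2 * (int j - int n)) = 3 * int n) \<or>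
     (n mod 2 = 1 \<and> 2 * (1 - 2 * (int j - int n)) = 3 * int n - 1)"
    unfolding critical_def by presburger
  also have "\<dots> \<longleftrightarrow> (n + 2 = 4 * j \<or> n + 3 = 4 * j)" by presburger
  finally show ?thesis .
qed

theorem mainTheorem8:
  assumes "(2::'k::field) \<noteq> 0" and "(3::'k) \<noteq> 0"
  shows "(\<forall>n. if n \<in> {1, 2} then HH_iso_k TYPE('k) n (1 - int n) else HH_zero TYPE('k) n (1 - int n))
       \<and> (\<forall>n. if n \<in> {5, 6} then HH_iso_k TYPE('k) n (2 - int n) else HH_zero TYPE('k) n (2 - int n))
       \<and> (\<forall>n. if n \<in> {9, 10} then HH_iso_k TYPE('k) n (3 - int n) else HH_zero TYPE('k) n (3 - int n))
       \<and> (\<forall>n. if n \<in> {13, 14} then HH_iso_k TYPE('k) n (4 - int n) else HH_zero TYPE('k) n (4 - int n))"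
proof -
  have line: "if n \<in> {4 * j - 3, 4 * j - 2} then HH_iso_k TYPE('k) n (int j - int n)
              else HH_zero TYPE('k) n (int j - int n)" if "1 \<le> j" for n j
  proof -
    have "(n + 2 = 4 * j \<or> n + 3 = 4 * j) \<longleftrightarrow> n \<in> {4 * j - 3, 4 * j - 2}" using that by auto
    then show ?thesis using HH_criterion[of n "int j - int n"] critical_gen[of n j] by simp
  qed
  show ?thesis
  proof (intro conjI allI)
    fix n :: nat
    show "if n \<in> {1, 2} then HH_iso_k TYPE('k) n (1 - int n) else HH_zero TYPE('k) n (1 - int n)"
      using line[of 1 n] by (auto split: if_split_asm)
    show "if n \<in> {5, 6} then HH_iso_k TYPE('k) n (2 - int n) else HH_zero TYPE('k) n (2 - int n)"
      using line[of 2 n] by (auto split: if_split_asm)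
    show "if n \<in> {9, 10} then HH_iso_k TYPE('k) n (3 - int n) else HH_zero TYPE('k) n (3 - int n)"
      using line[of 3 n] by (auto split: if_split_asm)
    show "if n \<in> {13, 14} then HH_iso_k TYPE('k) n (4 - int n) else HH_zero TYPE('k) n (4 - int n)"
      using line[of 4 n] by (auto split: if_split_asm)
  qed
qed

end
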